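(* Let $\omega$ be a primitive third root of unity, $S=\mathbb{C}\langle x,y,z\rangle/(x^2,y^2,z^2)$, and for $t\in\mathbb{C}^*$ let $T_t$ be the quotient of $S$ by the two-sided ideal generated by $(zxy+\omega xyz+\omega^2 yzx)+t(yxz+\omega zyx+\omega^2 xzy)$ and $(zxy+\omega^2 xyz+\omega yzx)+t(yxz+\omega^2 zyx+\omega xzy)$; let $M_t=T_t/(g_t)$ with $g_t=(zxy+xyz+yzx)+t(yxz+zyx+xzy)$. If $-t$ is a primitive $n$th root of unity, then the center of $M_t$ is generated (as an algebra) by $(x+y)^{2n}$, $(x+z)^{2n}$ and $(y+z)^{2n}$.
   Context: Grading: $\deg x=\deg y=\deg z=1$. *)

theory Defs
  imports Complex_Main
begin

text \<open>The free algebra C<x,y,z>: elements are coefficient functions on words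
  over the alphabet {X,Y,Z}; noncommutative polynomials are those with finite support.\<close>

datatype letter = X | Y | Z

type_synonym nc = "letter list \<Rightarrow> complex"

definition nc_poly :: "nc set" where
  "nc_poly = {f. finite {w. f w \<noteq> 0}}"

definition nc_zero :: nc where "nc_zero = (\<lambda>_. 0)"
definition nc_add :: "nc \<Rightarrow> nc \<Rightarrow> nc" where "nc_add f g = (\<lambda>w. f w + g w)"
definition nc_diff :: "nc \<Rightarrow> nc \<Rightarrow> nc" where "nc_diff f g = (\<lambda>w. f w - g w)"
definition nc_smult :: "complex \<Rightarrow> nc \<Rightarrow> nc" where "nc_smult c f = (\<lambda>w. c * f w)"
definition nc_mul :: "nc \<Rightarrow> nc \<Rightarrow> nc" where
  "nc_mul f g = (\<lambda>w. \<Sum>i\<le>length w. f (take i w) * g (drop i w))"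
definition nc_mono :: "letter list \<Rightarrow> nc" where
  "nc_mono u = (\<lambda>w. if w = u then 1 else 0)"
definition nc_one :: nc where "nc_one = nc_mono []"
definition nc_var :: "letter \<Rightarrow> nc" where "nc_var a = nc_mono [a]"

fun nc_pow :: "nc \<Rightarrow> nat \<Rightarrow> nc" where
  "nc_pow f 0 = nc_one"
| "nc_pow f (Suc k) = nc_mul f (nc_pow f k)"

inductive_set nc_ideal :: "nc set \<Rightarrow> nc set" for G :: "nc set" where
  zero: "nc_zero \<in> nc_ideal G"
| add: "a \<in> nc_ideal G \<Longrightarrow> b \<in> nc_ideal G \<Longrightarrow> nc_add a b \<in> nc_ideal G"
| smult: "a \<in> nc_ideal G \<Longrightarrow> nc_smult c a \<in> nc_ideal G"
| gen: "g \<in> G \<Longrightarrow> nc_mul (nc_mul (nc_mono u) g) (nc_mono v) \<in> nc_ideal G"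

inductive_set nc_subalg :: "nc set \<Rightarrow> nc set" for G :: "nc set" where
  one: "nc_one \<in> nc_subalg G"
| gen: "g \<in> G \<Longrightarrow> g \<in> nc_subalg G"
| add: "a \<in> nc_subalg G \<Longrightarrow> b \<in> nc_subalg G \<Longrightarrow> nc_add a b \<in> nc_subalg G"
| smult: "a \<in> nc_subalg G \<Longrightarrow> nc_smult c a \<in> nc_subalg G"
| mul: "a \<in> nc_subalg G \<Longrightarrow> b \<in> nc_subalg G \<Longrightarrow> nc_mul a b \<in> nc_subalg G"

definition x :: nc where "x = nc_var X"
definition y :: nc where "y = nc_var Y"
definition z :: nc where "z = nc_var Z"

definition mon3 :: "complex \<Rightarrow> letter \<Rightarrow> letter \<Rightarrow> letter \<Rightarrow> nc" where
  "mon3 c a b d = nc_smult c (nc_mono [a, b, d])"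

definition nc_sum :: "nc list \<Rightarrow> nc" where
  "nc_sum fs = foldr nc_add fs nc_zero"

definition rel :: "complex \<Rightarrow> complex \<Rightarrow> complex \<Rightarrow> nc" where
  "rel a b t = nc_sum [mon3 1 Z X Y, mon3 a X Y Z, mon3 b Y Z X,
                      mon3 t Y X Z, mon3 (t * a) Z Y X, mon3 (t * b) X Z Y]"

definition gT :: "complex \<Rightarrow> nc" where "gT t = rel 1 1 t"

definition I_M :: "complex \<Rightarrow> complex \<Rightarrow> nc set" where
  "I_M \<omega> t = nc_ideal {nc_mul x x, nc_mul y y, nc_mul z z,
                        rel \<omega> (\<omega>^2) t, rel (\<omega>^2) \<omega> t, gT t}"

text \<open>Preimage in C<x,y,z> of the center of the quotient C<x,y,z>/I.\<close>
definition central_mod :: "nc set \<Rightarrow> nc \<Rightarrow> bool" where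
  "central_mod I f \<longleftrightarrow> (\<forall>b\<in>nc_poly. nc_diff (nc_mul f b) (nc_mul b f) \<in> I)"

end

theory Submission
  imports Defs "HOL-Library.Multiset"
begin

text \<open>
  Modulo \<open>x\<^sup>2, y\<^sup>2, z\<^sup>2\<close>, the three cubic relations (the two defining \<open>T\<^sub>t\<close> and \<open>g\<^sub>t\<close>) amount to
  \<open>abc = q\<^sup>\<plusminus>\<^sup>1 cba\<close> for distinct letters \<open>a, b, c\<close>, where \<open>q = -t\<close>. Such moves preserve the
  multisets of letters in odd and in even positions (the label of a word), so every word is zero
  or \<open>q\<^sup>k\<close> times a normal word determined by its label; coordinate functionals vanishing on the
  ideal show that these normal words are linearly independent. Commuting a central element with
  single letters forces its coordinates to be supported on labels of even length whose letter
  counts are multiples of \<open>n\<close> (\<open>q\<close> is a primitive \<open>n\<close>-th root of unity), and to be symmetric under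
  exchanging the two multisets. Each symmetrised pair of such normal words is a product of powers
  of \<open>(a+b)\<^sup>2\<^sup>n \<equiv> (ab)\<^sup>n + (ba)\<^sup>n\<close>, and these are central because any third letter passes
  through \<open>(ab)\<^sup>n\<close> at the cost \<open>q\<^sup>\<plusminus>\<^sup>n = 1\<close>.
\<close>

section \<open>The free algebra\<close>

lemma nc_mul_mono_mono: "nc_mul (nc_mono u) (nc_mono v) = nc_mono (u @ v)"
proof
  fix w :: "letter list"
  have "take i w = u \<and> drop i w = v \<longleftrightarrow> w = u @ v \<and> i = length u" if "i \<le> length w" for i
    using that by (auto simp: append_eq_conv_conj)
  then have "nc_mul (nc_mono u) (nc_mono v) w = (\<Sum>i\<le>length w. if w = u @ v \<and> i = length u then 1 else 0)"
    unfolding nc_mul_def nc_mono_def by (intro sum.cong) auto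
  then show "nc_mul (nc_mono u) (nc_mono v) w = nc_mono (u @ v) w"
    by (simp add: nc_mono_def sum.delta' conj_commute if_distrib cong: if_cong)
qed

lemma nc_mul_assoc: "nc_mul (nc_mul f g) h = nc_mul f (nc_mul g h)"
proof
  fix w :: "letter list"
  let ?n = "length w"
  have "nc_mul (nc_mul f g) h w = (\<Sum>i\<le>?n. \<Sum>j\<le>i. f (take j w) * g (take (i - j) (drop j w)) * h (drop i w))"
    unfolding nc_mul_def
    by (auto simp: sum_distrib_right min_def take_drop intro!: sum.cong)
  also have "\<dots> = (\<Sum>i\<in>{..?n}. \<Sum>j\<in>{j\<in>{..?n}. j \<le> i}. f (take j w) * g (take (i - j) (drop j w)) * h (drop i w))"
    by (intro sum.cong) auto
  also have "\<dots> = (\<Sum>j\<in>{..?n}. \<Sum>i\<in>{i\<in>{..?n}. j \<le> i}. f (take j w) * g (take (i - j) (drop j w)) * h (drop i w))"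
    by (rule sum.swap_restrict) auto
  also have "\<dots> = (\<Sum>j\<le>?n. \<Sum>k\<le>?n - j. f (take j w) * g (take k (drop j w)) * h (drop (k + j) w))"
  proof (rule sum.cong[OF refl])
    fix j assume j: "j \<in> {..?n}"
    show "(\<Sum>i\<in>{i\<in>{..?n}. j \<le> i}. f (take j w) * g (take (i - j) (drop j w)) * h (drop i w)) =
          (\<Sum>k\<le>?n - j. f (take j w) * g (take k (drop j w)) * h (drop (k + j) w))"
      by (rule sum.reindex_bij_witness[of _ "\<lambda>k. j + k" "\<lambda>i. i - j"]) (use j in auto)
  qed
  also have "\<dots> = nc_mul f (nc_mul g h) w"
    unfolding nc_mul_def
    by (auto simp: sum_distrib_left mult.assoc intro!: sum.cong)
  finally show "nc_mul (nc_mul f g) h w = nc_mul f (nc_mul g h) w" .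
qed

lemma nc_mul_add_left: "nc_mul (nc_add f g) h = nc_add (nc_mul f h) (nc_mul g h)"
  by (rule ext) (simp add: nc_mul_def nc_add_def sum.distrib distrib_right)

lemma nc_mul_add_right: "nc_mul h (nc_add f g) = nc_add (nc_mul h f) (nc_mul h g)"
  by (rule ext) (simp add: nc_mul_def nc_add_def sum.distrib distrib_left)

lemma nc_mul_smult_left: "nc_mul (nc_smult c f) h = nc_smult c (nc_mul f h)"
  by (rule ext) (simp add: nc_mul_def nc_smult_def sum_distrib_left mult.assoc)

lemma nc_mul_smult_right: "nc_mul h (nc_smult c f) = nc_smult c (nc_mul h f)"
  by (rule ext) (simp add: nc_mul_def nc_smult_def sum_distrib_left mult.assoc mult.left_commute)

lemma nc_mul_zero_left: "nc_mul nc_zero h = nc_zero"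
  by (rule ext) (simp add: nc_mul_def nc_zero_def)

lemma nc_mul_zero_right: "nc_mul h nc_zero = nc_zero"
  by (rule ext) (simp add: nc_mul_def nc_zero_def)

lemma nc_mul_diff_left: "nc_mul (nc_diff f g) h = nc_diff (nc_mul f h) (nc_mul g h)"
  by (rule ext) (simp add: nc_mul_def nc_diff_def sum_subtractf left_diff_distrib)

lemma nc_mul_diff_right: "nc_mul h (nc_diff f g) = nc_diff (nc_mul h f) (nc_mul h g)"
  by (rule ext) (simp add: nc_mul_def nc_diff_def sum_subtractf right_diff_distrib)

lemma nc_mul_one_left: "nc_mul nc_one f = f"
proof
  fix w :: "letter list"
  have "nc_mul nc_one f w = (\<Sum>i\<le>length w. if i = 0 then f w else 0)"
    unfolding nc_mul_def nc_one_def nc_mono_def by (intro sum.cong) auto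
  then show "nc_mul nc_one f w = f w" by simp
qed

lemma nc_mul_one_right: "nc_mul f nc_one = f"
proof
  fix w :: "letter list"
  have "nc_mul f nc_one w = (\<Sum>i\<le>length w. if i = length w then f w else 0)"
    unfolding nc_mul_def nc_one_def nc_mono_def by (intro sum.cong) auto
  then show "nc_mul f nc_one w = f w" by simp
qed

lemma nc_add_commute: "nc_add f g = nc_add g f"
  by (simp add: fun_eq_iff nc_add_def add.commute)

definition nc_supp :: "nc \<Rightarrow> letter list set" where
  "nc_supp f = {w. f w \<noteq> 0}"

lemma nc_poly_iff: "f \<in> nc_poly \<longleftrightarrow> finite (nc_supp f)"
  by (simp add: nc_poly_def nc_supp_def)

definition nc_setsum :: "('i \<Rightarrow> nc) \<Rightarrow> 'i set \<Rightarrow> nc" where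
  "nc_setsum F A = (\<lambda>w. \<Sum>i\<in>A. F i w)"

lemma nc_setsum_empty: "nc_setsum F {} = nc_zero"
  by (simp add: nc_setsum_def nc_zero_def)

lemma nc_setsum_insert: "finite A \<Longrightarrow> a \<notin> A \<Longrightarrow> nc_setsum F (insert a A) = nc_add (F a) (nc_setsum F A)"
  by (rule ext) (simp add: nc_setsum_def nc_add_def)

lemma nc_mul_setsum_left: "nc_mul (nc_setsum F A) h = nc_setsum (\<lambda>i. nc_mul (F i) h) A"
  by (rule ext) (simp add: nc_setsum_def nc_mul_def sum_distrib_right sum.swap[of _ A])

lemma nc_mul_setsum_right: "nc_mul h (nc_setsum F A) = nc_setsum (\<lambda>i. nc_mul h (F i)) A"
  by (rule ext) (simp add: nc_setsum_def nc_mul_def sum_distrib_left sum.swap[of _ A])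

lemma nc_poly_expand: "f \<in> nc_poly \<Longrightarrow> f = nc_setsum (\<lambda>u. nc_smult (f u) (nc_mono u)) (nc_supp f)"
  by (rule ext) (simp add: nc_poly_iff nc_setsum_def nc_smult_def nc_mono_def nc_supp_def if_distrib cong: if_cong)

lemma nc_poly_add: "f \<in> nc_poly \<Longrightarrow> g \<in> nc_poly \<Longrightarrow> nc_add f g \<in> nc_poly"
  unfolding nc_poly_iff
  by (rule finite_subset[of _ "nc_supp f \<union> nc_supp g"]) (auto simp: nc_supp_def nc_add_def)

lemma nc_poly_smult: "f \<in> nc_poly \<Longrightarrow> nc_smult c f \<in> nc_poly"
  unfolding nc_poly_iff
  by (rule finite_subset[of _ "nc_supp f"]) (auto simp: nc_supp_def nc_smult_def)

lemma nc_poly_zero: "nc_zero \<in> nc_poly"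
  by (simp add: nc_poly_iff nc_supp_def nc_zero_def)

lemma nc_poly_mono: "nc_mono u \<in> nc_poly"
  unfolding nc_poly_iff
  by (rule finite_subset[of _ "{u}"]) (auto simp: nc_supp_def nc_mono_def)

lemma nc_poly_one: "nc_one \<in> nc_poly"
  by (simp add: nc_one_def nc_poly_mono)

lemma nc_poly_mul: "f \<in> nc_poly \<Longrightarrow> g \<in> nc_poly \<Longrightarrow> nc_mul f g \<in> nc_poly"
  unfolding nc_poly_iff
proof (rule finite_subset[of _ "(\<lambda>(u,v). u @ v) ` (nc_supp f \<times> nc_supp g)"])
  show "nc_supp (nc_mul f g) \<subseteq> (\<lambda>(u, v). u @ v) ` (nc_supp f \<times> nc_supp g)"
  proof
    fix w assume "w \<in> nc_supp (nc_mul f g)"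
    then have "(\<Sum>i\<le>length w. f (take i w) * g (drop i w)) \<noteq> 0" by (simp add: nc_supp_def nc_mul_def)
    then obtain i where "f (take i w) * g (drop i w) \<noteq> 0" by (meson sum.neutral)
    then show "w \<in> (\<lambda>(u, v). u @ v) ` (nc_supp f \<times> nc_supp g)"
      by (intro image_eqI[of _ _ "(take i w, drop i w)"]) (auto simp: nc_supp_def)
  qed
qed auto

lemma nc_poly_setsum: "finite A \<Longrightarrow> (\<And>i. i \<in> A \<Longrightarrow> F i \<in> nc_poly) \<Longrightarrow> nc_setsum F A \<in> nc_poly"
  by (induction A rule: finite_induct) (auto simp: nc_setsum_empty nc_setsum_insert nc_poly_zero nc_poly_add)

lemma nc_poly_pow: "f \<in> nc_poly \<Longrightarrow> nc_pow f k \<in> nc_poly"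
  by (induction k) (auto simp: nc_poly_one nc_poly_mul)

lemma nc_setsum_symmetrize:
  assumes "finite S" and "\<And>L. L \<in> S \<Longrightarrow> prod.swap L \<in> S" and "\<And>L. L \<in> S \<Longrightarrow> c (prod.swap L) = c L"
  shows "nc_setsum (\<lambda>L. nc_smult (c L) (m L)) S =
         nc_setsum (\<lambda>L. nc_smult (c L / 2) (nc_add (m L) (m (prod.swap L)))) S"
proof (rule ext)
  fix v
  have "(\<Sum>L\<in>S. c L / 2 * m (prod.swap L) v) = (\<Sum>L\<in>S. c (prod.swap L) / 2 * m (prod.swap L) v)"
    using assms(3) by simp
  also have "\<dots> = (\<Sum>L\<in>S. c L / 2 * m L v)"
    by (rule sum.reindex_bij_witness[of _ prod.swap prod.swap]) (auto simp: assms(2))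
  finally have "(\<Sum>L\<in>S. c L / 2 * (m L v + m (prod.swap L) v)) = 2 * (\<Sum>L\<in>S. c L / 2 * m L v)"
    by (simp add: distrib_left sum.distrib)
  also have "\<dots> = (\<Sum>L\<in>S. c L * m L v)"
    by (simp add: sum_distrib_left)
  finally show "nc_setsum (\<lambda>L. nc_smult (c L) (m L)) S v =
      nc_setsum (\<lambda>L. nc_smult (c L / 2) (nc_add (m L) (m (prod.swap L)))) S v"
    by (simp add: nc_setsum_def nc_smult_def nc_add_def)
qed

lemma nc_mono_sandwich:
  "g \<in> nc_poly \<Longrightarrow> nc_mul (nc_mul (nc_mono u) g) (nc_mono v) =
                   nc_setsum (\<lambda>w. nc_smult (g w) (nc_mono (u @ w @ v))) (nc_supp g)"
proof -
  assume g: "g \<in> nc_poly"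
  have "nc_mul (nc_mul (nc_mono u) g) (nc_mono v) =
    nc_mul (nc_mul (nc_mono u) (nc_setsum (\<lambda>w. nc_smult (g w) (nc_mono w)) (nc_supp g))) (nc_mono v)"
    using nc_poly_expand[OF g] by simp
  then show ?thesis
    by (simp add: nc_mul_setsum_left nc_mul_setsum_right nc_mul_smult_left nc_mul_smult_right nc_mul_mono_mono)
qed

section \<open>Ideals, congruence and centrality\<close>

lemma nc_ideal_poly: assumes "G \<subseteq> nc_poly" shows "a \<in> nc_ideal G \<Longrightarrow> a \<in> nc_poly"
  by (induction rule: nc_ideal.induct) (use assms in \<open>auto simp: nc_poly_zero nc_poly_add nc_poly_smult nc_poly_mul nc_poly_mono\<close>)

lemma nc_ideal_diff: "a \<in> nc_ideal G \<Longrightarrow> b \<in> nc_ideal G \<Longrightarrow> nc_diff a b \<in> nc_ideal G"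
proof -
  assume "a \<in> nc_ideal G" "b \<in> nc_ideal G"
  then have "nc_add a (nc_smult (-1) b) \<in> nc_ideal G" by (intro nc_ideal.add nc_ideal.smult)
  moreover have "nc_add a (nc_smult (-1) b) = nc_diff a b"
    by (rule ext) (simp add: nc_add_def nc_smult_def nc_diff_def)
  ultimately show ?thesis by simp
qed

lemma nc_ideal_setsum: "finite A \<Longrightarrow> (\<And>i. i \<in> A \<Longrightarrow> F i \<in> nc_ideal G) \<Longrightarrow> nc_setsum F A \<in> nc_ideal G"
  by (induction A rule: finite_induct) (auto simp: nc_setsum_empty nc_setsum_insert intro: nc_ideal.intros)

lemma nc_ideal_mul_mono_left: "a \<in> nc_ideal G \<Longrightarrow> nc_mul (nc_mono u) a \<in> nc_ideal G"
proof (induction rule: nc_ideal.induct)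
  case (gen g u' v)
  have "nc_mul (nc_mono u) (nc_mul (nc_mul (nc_mono u') g) (nc_mono v)) =
        nc_mul (nc_mul (nc_mono (u @ u')) g) (nc_mono v)"
    by (simp add: nc_mul_assoc[symmetric] nc_mul_mono_mono)
  with gen show ?case by (simp add: nc_ideal.gen)
next
  case zero then show ?case by (simp add: nc_mul_zero_right nc_ideal.zero)
next
  case (add a b) then show ?case by (simp add: nc_mul_add_right nc_ideal.add)
next
  case (smult a c) then show ?case by (simp add: nc_mul_smult_right nc_ideal.smult)
qed

lemma nc_ideal_mul_mono_right: "a \<in> nc_ideal G \<Longrightarrow> nc_mul a (nc_mono v) \<in> nc_ideal G"
proof (induction rule: nc_ideal.induct)
  case (gen g u v')
  have "nc_mul (nc_mul (nc_mul (nc_mono u) g) (nc_mono v')) (nc_mono v) =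
        nc_mul (nc_mul (nc_mono u) g) (nc_mono (v' @ v))"
    by (simp add: nc_mul_assoc nc_mul_mono_mono)
  with gen show ?case by (simp add: nc_ideal.gen)
next
  case zero then show ?case by (simp add: nc_mul_zero_left nc_ideal.zero)
next
  case (add a b) then show ?case by (simp add: nc_mul_add_left nc_ideal.add)
next
  case (smult a c) then show ?case by (simp add: nc_mul_smult_left nc_ideal.smult)
qed

lemma nc_ideal_mul_left:
  assumes p: "p \<in> nc_poly" and a: "a \<in> nc_ideal G" shows "nc_mul p a \<in> nc_ideal G"
proof -
  have "nc_mul p a = nc_setsum (\<lambda>u. nc_mul (nc_smult (p u) (nc_mono u)) a) (nc_supp p)"
    by (subst nc_poly_expand[OF p]) (simp add: nc_mul_setsum_left)
  also have "\<dots> \<in> nc_ideal G"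
    using p a by (intro nc_ideal_setsum)
      (auto simp: nc_poly_iff nc_mul_smult_left intro: nc_ideal.smult nc_ideal_mul_mono_left)
  finally show ?thesis .
qed

lemma nc_ideal_mul_right:
  assumes p: "p \<in> nc_poly" and a: "a \<in> nc_ideal G" shows "nc_mul a p \<in> nc_ideal G"
proof -
  have "nc_mul a p = nc_setsum (\<lambda>u. nc_mul a (nc_smult (p u) (nc_mono u))) (nc_supp p)"
    by (subst nc_poly_expand[OF p]) (simp add: nc_mul_setsum_right)
  also have "\<dots> \<in> nc_ideal G"
    using p a by (intro nc_ideal_setsum)
      (auto simp: nc_poly_iff nc_mul_smult_right intro: nc_ideal.smult nc_ideal_mul_mono_right)
  finally show ?thesis .
qed

lemma nc_ideal_gen_mem: "g \<in> G \<Longrightarrow> g \<in> nc_ideal G"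
  using nc_ideal.gen[of g G "[]" "[]"] by (simp add: nc_one_def[symmetric] nc_mul_one_left nc_mul_one_right)

lemma nc_ideal_mono: assumes "G \<subseteq> H" shows "a \<in> nc_ideal G \<Longrightarrow> a \<in> nc_ideal H"
  by (induction rule: nc_ideal.induct) (use assms in \<open>auto intro: nc_ideal.intros\<close>)

definition nc_cong :: "nc set \<Rightarrow> nc \<Rightarrow> nc \<Rightarrow> bool" where
  "nc_cong G F H \<longleftrightarrow> nc_diff F H \<in> nc_ideal G"

lemma nc_cong_refl: "nc_cong G F F"
proof -
  have "nc_diff F F = nc_zero" by (simp add: fun_eq_iff nc_diff_def nc_zero_def)
  then show ?thesis by (simp add: nc_cong_def nc_ideal.zero)
qed

lemma nc_cong_sym: "nc_cong G F H \<Longrightarrow> nc_cong G H F"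
proof -
  have "nc_diff H F = nc_smult (-1) (nc_diff F H)" by (simp add: fun_eq_iff nc_diff_def nc_smult_def)
  then show "nc_cong G F H \<Longrightarrow> nc_cong G H F" by (simp add: nc_cong_def nc_ideal.smult)
qed

lemma nc_cong_trans [trans]: "nc_cong G F F' \<Longrightarrow> nc_cong G F' H \<Longrightarrow> nc_cong G F H"
proof -
  have "nc_diff F H = nc_add (nc_diff F F') (nc_diff F' H)" by (simp add: fun_eq_iff nc_diff_def nc_add_def)
  then show "nc_cong G F F' \<Longrightarrow> nc_cong G F' H \<Longrightarrow> nc_cong G F H" by (simp add: nc_cong_def nc_ideal.add)
qed

lemma nc_cong_add: "nc_cong G F F' \<Longrightarrow> nc_cong G H H' \<Longrightarrow> nc_cong G (nc_add F H) (nc_add F' H')"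
proof -
  have "nc_diff (nc_add F H) (nc_add F' H') = nc_add (nc_diff F F') (nc_diff H H')"
    by (simp add: fun_eq_iff nc_diff_def nc_add_def)
  then show "nc_cong G F F' \<Longrightarrow> nc_cong G H H' \<Longrightarrow> ?thesis" by (simp add: nc_cong_def nc_ideal.add)
qed

lemma nc_cong_smult: "nc_cong G F F' \<Longrightarrow> nc_cong G (nc_smult c F) (nc_smult c F')"
proof -
  have "nc_diff (nc_smult c F) (nc_smult c F') = nc_smult c (nc_diff F F')"
    by (simp add: fun_eq_iff nc_diff_def nc_smult_def algebra_simps)
  then show "nc_cong G F F' \<Longrightarrow> ?thesis" by (simp add: nc_cong_def nc_ideal.smult)
qed

lemma nc_cong_mul:
  assumes "F' \<in> nc_poly" "H \<in> nc_poly" "nc_cong G F F'" "nc_cong G H H'"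
  shows "nc_cong G (nc_mul F H) (nc_mul F' H')"
proof -
  have "nc_diff (nc_mul F H) (nc_mul F' H') = nc_add (nc_mul (nc_diff F F') H) (nc_mul F' (nc_diff H H'))"
    by (simp only: nc_mul_diff_left nc_mul_diff_right) (simp add: fun_eq_iff nc_diff_def nc_add_def)
  then show ?thesis
    using assms unfolding nc_cong_def by (simp add: nc_ideal.add nc_ideal_mul_left nc_ideal_mul_right)
qed

lemma nc_cong_setsum:
  "finite A \<Longrightarrow> (\<And>i. i \<in> A \<Longrightarrow> nc_cong G (F i) (H i)) \<Longrightarrow> nc_cong G (nc_setsum F A) (nc_setsum H A)"
proof -
  have "nc_diff (nc_setsum F A) (nc_setsum H A) = nc_setsum (\<lambda>i. nc_diff (F i) (H i)) A"
    by (simp add: fun_eq_iff nc_diff_def nc_setsum_def sum_subtractf)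
  then show "finite A \<Longrightarrow> (\<And>i. i \<in> A \<Longrightarrow> nc_cong G (F i) (H i)) \<Longrightarrow> ?thesis"
    unfolding nc_cong_def by (simp add: nc_ideal_setsum)
qed

lemma nc_cong_zero_iff: "nc_cong G F nc_zero \<longleftrightarrow> F \<in> nc_ideal G"
proof -
  have "nc_diff F nc_zero = F" by (simp add: fun_eq_iff nc_diff_def nc_zero_def)
  then show ?thesis by (simp add: nc_cong_def)
qed

lemma nc_cong_add_ideal: "u \<in> nc_ideal G \<Longrightarrow> nc_cong G (nc_add u F) F"
proof -
  have "nc_diff (nc_add u F) F = u" by (simp add: fun_eq_iff nc_diff_def nc_add_def)
  then show "u \<in> nc_ideal G \<Longrightarrow> ?thesis" by (simp add: nc_cong_def)
qed

lemma central_mod_iff_cong: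
  "central_mod (nc_ideal G) f \<longleftrightarrow> (\<forall>b\<in>nc_poly. nc_cong G (nc_mul f b) (nc_mul b f))"
  by (simp add: central_mod_def nc_cong_def)

lemma central_mod_if_commutes_letters:
  assumes F: "F \<in> nc_poly" and H: "\<And>e. nc_cong G (nc_mul F (nc_mono [e])) (nc_mul (nc_mono [e]) F)"
  shows "central_mod (nc_ideal G) F"
proof -
  have words: "nc_cong G (nc_mul F (nc_mono w)) (nc_mul (nc_mono w) F)" for w
  proof (induction w)
    case Nil then show ?case by (simp add: nc_one_def[symmetric] nc_mul_one_left nc_mul_one_right nc_cong_refl)
  next
    case (Cons e w)
    have m: "nc_mono (e # w) = nc_mul (nc_mono [e]) (nc_mono w)" by (simp add: nc_mul_mono_mono)
    have "nc_cong G (nc_mul (nc_mul F (nc_mono [e])) (nc_mono w)) (nc_mul (nc_mul (nc_mono [e]) F) (nc_mono w))"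
      by (rule nc_cong_mul[OF nc_poly_mul[OF nc_poly_mono F] nc_poly_mono H nc_cong_refl])
    moreover have "nc_cong G (nc_mul (nc_mono [e]) (nc_mul F (nc_mono w))) (nc_mul (nc_mono [e]) (nc_mul (nc_mono w) F))"
      by (rule nc_cong_mul[OF nc_poly_mono nc_poly_mul[OF F nc_poly_mono] nc_cong_refl Cons])
    ultimately show ?case unfolding m nc_mul_assoc by (blast intro: nc_cong_trans)
  qed
  show ?thesis unfolding central_mod_iff_cong
  proof
    fix b assume b: "b \<in> nc_poly"
    have "nc_cong G (nc_setsum (\<lambda>u. nc_smult (b u) (nc_mul F (nc_mono u))) (nc_supp b))
                     (nc_setsum (\<lambda>u. nc_smult (b u) (nc_mul (nc_mono u) F)) (nc_supp b))"
      using b words by (intro nc_cong_setsum nc_cong_smult) (auto simp: nc_poly_iff)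
    then show "nc_cong G (nc_mul F b) (nc_mul b F)"
      by (subst (1 2) nc_poly_expand[OF b])
         (simp add: nc_mul_setsum_left nc_mul_setsum_right nc_mul_smult_left nc_mul_smult_right)
  qed
qed

lemma central_mod_one: "central_mod (nc_ideal G) nc_one"
  by (simp add: central_mod_iff_cong nc_mul_one_left nc_mul_one_right nc_cong_refl)

lemma central_mod_add:
  "f \<in> nc_poly \<Longrightarrow> central_mod (nc_ideal G) f \<Longrightarrow> central_mod (nc_ideal G) g \<Longrightarrow> central_mod (nc_ideal G) (nc_add f g)"
  by (simp add: central_mod_iff_cong nc_mul_add_left nc_mul_add_right nc_cong_add)

lemma central_mod_smult: "central_mod (nc_ideal G) f \<Longrightarrow> central_mod (nc_ideal G) (nc_smult c f)"
  by (simp add: central_mod_iff_cong nc_mul_smult_left nc_mul_smult_right nc_cong_smult)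

lemma central_mod_mul:
  assumes f: "f \<in> nc_poly" and g: "g \<in> nc_poly"
    and cf: "central_mod (nc_ideal G) f" and cg: "central_mod (nc_ideal G) g"
  shows "central_mod (nc_ideal G) (nc_mul f g)"
  unfolding central_mod_iff_cong
proof
  fix b assume b: "b \<in> nc_poly"
  have "nc_cong G (nc_mul f (nc_mul g b)) (nc_mul f (nc_mul b g))"
    using cg b by (intro nc_cong_mul[OF f nc_poly_mul[OF g b] nc_cong_refl]) (simp add: central_mod_iff_cong)
  moreover have "nc_cong G (nc_mul (nc_mul f b) g) (nc_mul (nc_mul b f) g)"
    using cf b by (intro nc_cong_mul[OF nc_poly_mul[OF b f] g _ nc_cong_refl]) (simp add: central_mod_iff_cong)
  ultimately show "nc_cong G (nc_mul (nc_mul f g) b) (nc_mul b (nc_mul f g))"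
    by (simp add: nc_mul_assoc) (blast intro: nc_cong_trans)
qed

lemma central_mod_cong:
  assumes h: "central_mod (nc_ideal G) h" and fh: "nc_cong G f h"
  shows "central_mod (nc_ideal G) f"
  unfolding central_mod_iff_cong
proof
  fix b assume b: "b \<in> nc_poly"
  have "nc_diff (nc_mul f b) (nc_mul b f) =
      nc_add (nc_diff (nc_mul h b) (nc_mul b h)) (nc_diff (nc_mul (nc_diff f h) b) (nc_mul b (nc_diff f h)))"
    by (simp only: nc_mul_diff_left nc_mul_diff_right) (simp add: fun_eq_iff nc_add_def nc_diff_def)
  moreover have "nc_diff (nc_mul h b) (nc_mul b h) \<in> nc_ideal G"
    using h b by (simp add: central_mod_def)
  moreover have "nc_diff (nc_mul (nc_diff f h) b) (nc_mul b (nc_diff f h)) \<in> nc_ideal G"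
    using nc_ideal_diff[OF nc_ideal_mul_right[OF b] nc_ideal_mul_left[OF b]] fh by (simp add: nc_cong_def)
  ultimately show "nc_cong G (nc_mul f b) (nc_mul b f)" by (simp add: nc_cong_def nc_ideal.add)
qed

lemma nc_subalg_pow: "F \<in> nc_subalg G \<Longrightarrow> nc_pow F k \<in> nc_subalg G"
  by (induction k) (auto intro: nc_subalg.intros)

lemma nc_subalg_zero: "nc_zero \<in> nc_subalg G"
proof -
  have "nc_smult 0 nc_one = nc_zero" by (simp add: fun_eq_iff nc_smult_def nc_zero_def)
  then show ?thesis using nc_subalg.smult[OF nc_subalg.one[of G], of 0] by simp
qed

lemma nc_subalg_setsum: "finite A \<Longrightarrow> (\<And>i. i \<in> A \<Longrightarrow> F i \<in> nc_subalg G) \<Longrightarrow> nc_setsum F A \<in> nc_subalg G"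
  by (induction A rule: finite_induct) (auto simp: nc_setsum_empty nc_setsum_insert nc_subalg_zero intro: nc_subalg.intros)

lemma nc_subalg_central:
  assumes "\<And>g. g \<in> S \<Longrightarrow> g \<in> nc_poly \<and> central_mod (nc_ideal G) g"
  shows "F \<in> nc_subalg S \<Longrightarrow> F \<in> nc_poly \<and> central_mod (nc_ideal G) F"
  by (induction rule: nc_subalg.induct)
     (auto simp: assms nc_poly_one nc_poly_add nc_poly_smult nc_poly_mul central_mod_one
       central_mod_add central_mod_smult central_mod_mul)

section \<open>Linear functionals on the free algebra\<close>

definition nc_pair :: "(letter list \<Rightarrow> complex) \<Rightarrow> nc \<Rightarrow> complex" where
  "nc_pair \<phi> f = (\<Sum>w\<in>nc_supp f. f w * \<phi> w)"

lemma nc_pair_superset: "finite A \<Longrightarrow> nc_supp f \<subseteq> A \<Longrightarrow> nc_pair \<phi> f = (\<Sum>w\<in>A. f w * \<phi> w)"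
  unfolding nc_pair_def by (rule sum.mono_neutral_left) (auto simp: nc_supp_def)

lemma nc_pair_add:
  assumes f: "f \<in> nc_poly" and g: "g \<in> nc_poly"
  shows "nc_pair \<phi> (nc_add f g) = nc_pair \<phi> f + nc_pair \<phi> g"
proof -
  let ?A = "nc_supp f \<union> nc_supp g"
  have fin: "finite ?A" using f g by (simp add: nc_poly_iff)
  have "nc_pair \<phi> (nc_add f g) = (\<Sum>w\<in>?A. nc_add f g w * \<phi> w)"
    by (rule nc_pair_superset[OF fin]) (auto simp: nc_supp_def nc_add_def)
  also have "\<dots> = (\<Sum>w\<in>?A. f w * \<phi> w) + (\<Sum>w\<in>?A. g w * \<phi> w)"
    by (simp add: nc_add_def distrib_right sum.distrib)
  also have "\<dots> = nc_pair \<phi> f + nc_pair \<phi> g"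
    using nc_pair_superset[OF fin, of f] nc_pair_superset[OF fin, of g] by auto
  finally show ?thesis .
qed

lemma nc_pair_smult: "nc_pair \<phi> (nc_smult c f) = c * nc_pair \<phi> f"
proof (cases "c = 0")
  case False
  then have "nc_supp (nc_smult c f) = nc_supp f" by (auto simp: nc_supp_def nc_smult_def)
  then show ?thesis by (simp add: nc_pair_def nc_smult_def sum_distrib_left mult.assoc)
qed (simp add: nc_pair_def nc_smult_def nc_supp_def)

lemma nc_pair_zero: "nc_pair \<phi> nc_zero = 0"
  by (simp add: nc_pair_def nc_supp_def nc_zero_def)

lemma nc_pair_diff:
  assumes "f \<in> nc_poly" and "g \<in> nc_poly"
  shows "nc_pair \<phi> (nc_diff f g) = nc_pair \<phi> f - nc_pair \<phi> g"
proof -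
  have "nc_diff f g = nc_add f (nc_smult (-1) g)"
    by (rule ext) (simp add: nc_add_def nc_smult_def nc_diff_def)
  then show ?thesis using assms by (simp add: nc_pair_add nc_poly_smult nc_pair_smult)
qed

lemma nc_pair_mono: "nc_pair \<phi> (nc_mono u) = \<phi> u"
  using nc_pair_superset[of "{u}" "nc_mono u" \<phi>] by (auto simp: nc_supp_def nc_mono_def)

lemma nc_pair_setsum:
  "finite A \<Longrightarrow> (\<And>i. i \<in> A \<Longrightarrow> F i \<in> nc_poly) \<Longrightarrow> nc_pair \<phi> (nc_setsum F A) = (\<Sum>i\<in>A. nc_pair \<phi> (F i))"
  by (induction A rule: finite_induct) (auto simp: nc_setsum_empty nc_setsum_insert nc_pair_zero nc_pair_add nc_poly_setsum)

lemma nc_pair_mono_sandwich: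
  assumes g: "g \<in> nc_poly"
  shows "nc_pair \<phi> (nc_mul (nc_mul (nc_mono u) g) (nc_mono v)) = nc_pair (\<lambda>w. \<phi> (u @ w @ v)) g"
proof -
  have "finite (nc_supp g)" using g by (simp add: nc_poly_iff)
  then have "nc_pair \<phi> (nc_mul (nc_mul (nc_mono u) g) (nc_mono v)) =
      (\<Sum>w\<in>nc_supp g. nc_pair \<phi> (nc_smult (g w) (nc_mono (u @ w @ v))))"
    by (simp add: nc_mono_sandwich[OF g] nc_pair_setsum nc_poly_smult nc_poly_mono)
  also have "\<dots> = (\<Sum>w\<in>nc_supp g. g w * \<phi> (u @ w @ v))"
    by (simp add: nc_pair_smult nc_pair_mono)
  finally show ?thesis by (simp add: nc_pair_def)
qed

lemma nc_pair_mul_mono_right: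
  "f \<in> nc_poly \<Longrightarrow> nc_pair \<phi> (nc_mul f (nc_mono [e])) = (\<Sum>w\<in>nc_supp f. f w * \<phi> (w @ [e]))"
  using nc_pair_mono_sandwich[of f \<phi> "[]" "[e]"] by (simp add: nc_one_def[symmetric] nc_mul_one_left nc_pair_def)

lemma nc_pair_mul_mono_left:
  "f \<in> nc_poly \<Longrightarrow> nc_pair \<phi> (nc_mul (nc_mono [e]) f) = (\<Sum>w\<in>nc_supp f. f w * \<phi> (e # w))"
  using nc_pair_mono_sandwich[of f \<phi> "[e]" "[]"] by (simp add: nc_one_def[symmetric] nc_mul_one_right nc_pair_def)

lemma nc_pair_ideal_eq_0:
  assumes G: "G \<subseteq> nc_poly" and H: "\<And>g u v. g \<in> G \<Longrightarrow> nc_pair (\<lambda>w. \<phi> (u @ w @ v)) g = 0"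
  shows "a \<in> nc_ideal G \<Longrightarrow> nc_pair \<phi> a = 0"
proof (induction rule: nc_ideal.induct)
  case (add a b) then show ?case using nc_ideal_poly[OF G] by (simp add: nc_pair_add)
next
  case (gen g u v) then show ?case using G H by (auto simp: nc_pair_mono_sandwich)
qed (simp_all add: nc_pair_zero nc_pair_smult)

section \<open>Words, labels and normal words\<close>

fun nxt :: "letter \<Rightarrow> letter" where "nxt X = Y" | "nxt Y = Z" | "nxt Z = X"
fun prv :: "letter \<Rightarrow> letter" where "prv X = Z" | "prv Y = X" | "prv Z = Y"

lemma nxt_prv [simp]: "nxt (prv a) = a" and prv_nxt [simp]: "prv (nxt a) = a"
  by (cases a; simp)+

lemma nxt_neq [simp]: "nxt a \<noteq> a" "prv a \<noteq> a" "a \<noteq> nxt a" "a \<noteq> prv a"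
  by (cases a; simp)+

lemma nxt_nxt: "nxt (nxt a) = prv a" and prv_prv: "prv (prv a) = nxt a"
  by (cases a; simp)+

lemma nxt_neq_prv [simp]: "nxt a \<noteq> prv a" "prv a \<noteq> nxt a"
  by (cases a; simp)+

lemma letter_cases3: "b = a \<or> b = nxt a \<or> b = prv a"
  by (cases a; cases b; simp)

fun odds :: "letter list \<Rightarrow> letter list" and evens :: "letter list \<Rightarrow> letter list" where
  "odds [] = []" | "odds (a # w) = a # evens w"
| "evens [] = []" | "evens (a # w) = odds w"

lemma odds_evens_append:
  "odds (u @ v) = odds u @ (if even (length u) then odds v else evens v) \<and>
   evens (u @ v) = evens u @ (if even (length u) then evens v else odds v)"
  by (induction u) auto

lemma odds_append: "odds (u @ v) = odds u @ (if even (length u) then odds v else evens v)"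
  using odds_evens_append by blast

lemma evens_append: "evens (u @ v) = evens u @ (if even (length u) then evens v else odds v)"
  using odds_evens_append by blast

lemma length_odds_evens: "length (odds w) = length (evens w) \<or> length (odds w) = Suc (length (evens w))"
  by (induction w) auto

text \<open>The cubic relations move letters by two places, so they permute the letters in odd positions
  among themselves, and likewise those in even positions; the label records the two multisets.\<close>

type_synonym label = "letter multiset \<times> letter multiset"

definition label :: "letter list \<Rightarrow> label" where
  "label w = (mset (odds w), mset (evens w))"

definition label_cons :: "letter \<Rightarrow> label \<Rightarrow> label" where
  "label_cons e L = (add_mset e (snd L), fst L)"

definition balanced :: "label \<Rightarrow> bool" where
  "balanced L \<longleftrightarrow> size (snd L) \<le> size (fst L) \<and> size (fst L) \<le> Suc (size (snd L))"

text \<open>Words whose label is not admissible vanish in \<open>M\<^sub>t\<close>.\<close>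

definition admissible :: "label \<Rightarrow> bool" where
  "admissible L \<longleftrightarrow> (\<exists>g. set_mset (fst L) \<subseteq> {g} \<and> g \<notin># snd L) \<or> (\<exists>d. set_mset (snd L) \<subseteq> {d} \<and> d \<notin># fst L)"

lemma label_Nil: "label [] = ({#}, {#})"
  by (simp add: label_def)

lemma label_Cons: "label (e # w) = label_cons e (label w)"
  by (simp add: label_def label_cons_def)

lemma label_snoc: "label (w @ [e]) = (if even (length w) then (add_mset e (fst (label w)), snd (label w))
    else (fst (label w), add_mset e (snd (label w))))"
  by (simp add: label_def odds_append evens_append)

lemma balanced_label: "balanced (label w)"
  using length_odds_evens[of w] by (auto simp: balanced_def label_def)

lemma size_label: "size (fst (label w)) + size (snd (label w)) = length w"
  by (induction w) (auto simp: label_def)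

lemma even_length_iff_label: "even (length w) \<longleftrightarrow> size (fst (label w)) = size (snd (label w))"
  using balanced_label[of w] size_label[of w] by (auto simp: balanced_def) presburger+

lemma admissible_empty: "admissible ({#}, {#})"
  by (simp add: admissible_def)

lemma not_admissible_common: "a \<in># fst L \<Longrightarrow> a \<in># snd L \<Longrightarrow> \<not> admissible L"
  unfolding admissible_def by auto

lemma admissible_label_cons_imp: "admissible (label_cons e L) \<Longrightarrow> admissible L"
  unfolding admissible_def label_cons_def by auto

lemma admissible_swap: "admissible (prod.swap L) = admissible L"
  unfolding admissible_def by auto

lemma not_admissible_cons_mixed:
  assumes "d \<in># E" "nxt d \<in># Mo" "prv d \<in># Mo" "e \<noteq> d"
  shows "\<not> admissible (label_cons e (Mo, E))"
proof
  assume "admissible (label_cons e (Mo, E))"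
  then consider g where "set_mset (add_mset e E) \<subseteq> {g}" | d' where "set_mset Mo \<subseteq> {d'}"
    unfolding admissible_def label_cons_def by auto
  then show False
  proof cases
    case (1 g)
    then have "e = g" "d = g" using assms(1) by auto
    then show False using assms(4) by simp
  next
    case (2 d')
    then have "nxt d = d'" "prv d = d'" using assms(2,3) by auto
    then show False using nxt_neq_prv(1)[of d] by simp
  qed
qed

lemma admissible_subset:
  "admissible L' \<Longrightarrow> fst L \<subseteq># fst L' \<Longrightarrow> snd L \<subseteq># snd L' \<Longrightarrow> admissible L"
  unfolding admissible_def by (meson mset_subset_eqD subset_iff)

text \<open>Inversions with respect to the cyclic order \<open>X < Y < Z < X\<close>, counted separately in both
  parity classes; they give the power of \<open>q\<close> relating a word to its normal word.\<close>

fun invs_list :: "letter list \<Rightarrow> nat" where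
  "invs_list [] = 0" | "invs_list (a # s) = count (mset s) (prv a) + invs_list s"

definition invs :: "letter list \<Rightarrow> nat" where
  "invs w = invs_list (odds w) + invs_list (evens w)"

lemma invs_list_append: "invs_list (P @ R) = invs_list P + invs_list R + (\<Sum>x\<leftarrow>P. count (mset R) (prv x))"
  by (induction P) auto

lemma invs_list_swap: "prv a = c \<Longrightarrow> invs_list (P @ a # c # Q) = Suc (invs_list (P @ c # a # Q))"
proof -
  assume ac: "prv a = c"
  then have "prv c \<noteq> a" by (metis prv_prv nxt_neq(1))
  then have "invs_list (a # c # Q) = Suc (invs_list (c # a # Q))" using ac by simp
  moreover have "mset (a # c # Q) = mset (c # a # Q)" by simp
  ultimately show ?thesis by (simp only: invs_list_append)
qed

lemma invs_list_snoc: "invs_list (s @ [e]) = invs_list s + count (mset s) (nxt e)"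
proof -
  have "(\<Sum>x\<leftarrow>s. count {#e#} (prv x)) = count (mset s) (nxt e)" by (induction s) auto
  then show ?thesis using invs_list_append[of s "[e]"] by simp
qed

lemma invs_Nil: "invs [] = 0"
  by (simp add: invs_def)

lemma invs_Cons: "invs (e # w) = count (snd (label w)) (prv e) + invs w"
  by (simp add: invs_def label_def)

lemma invs_snoc: "invs (w @ [e]) = invs w +
    (if even (length w) then count (fst (label w)) (nxt e) else count (snd (label w)) (nxt e))"
  by (simp add: invs_def label_def odds_append evens_append invs_list_snoc)

lemma invs_rotate3:
  assumes "b = nxt a" "c = nxt b"
  shows "invs (u @ [a, b, c] @ v) = Suc (invs (u @ [c, b, a] @ v))"
  using assms invs_list_swap[of a c] unfolding invs_def by (simp add: odds_append evens_append nxt_nxt)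

lemma label_rotate3: "label (u @ [a, b, c] @ v) = label (u @ [c, b, a] @ v)"
  by (auto simp: label_def odds_append evens_append)

function interleave :: "letter list \<Rightarrow> letter list \<Rightarrow> letter list" where
  "interleave [] ys = []" | "interleave (a # xs) ys = a # interleave ys xs"
  by pat_completeness auto
termination by (relation "measure (\<lambda>(xs, ys). length xs + length ys)") auto

definition ab_pow :: "letter \<Rightarrow> letter \<Rightarrow> nat \<Rightarrow> letter list" where
  "ab_pow a b k = concat (replicate k [a, b])"

fun alternating :: "letter \<Rightarrow> letter \<Rightarrow> nat \<Rightarrow> letter list" where
  "alternating a b 0 = []" | "alternating a b (Suc k) = a # alternating b a k"

lemma ab_pow_0 [simp]: "ab_pow a b 0 = []" and ab_pow_Suc: "ab_pow a b (Suc k) = a # b # ab_pow a b k"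
  by (simp_all add: ab_pow_def)

lemma ab_pow_Suc': "ab_pow a b (Suc k) = ab_pow a b k @ [a, b]"
  by (induction k) (auto simp: ab_pow_Suc)

lemma ab_pow_add: "ab_pow a b (k + l) = ab_pow a b k @ ab_pow a b l"
  by (induction k) (auto simp: ab_pow_Suc)

lemma ab_pow_snoc: "ab_pow a b k @ [a] = a # ab_pow b a k"
  by (induction k) (auto simp: ab_pow_Suc)

lemma alternating_double: "alternating a b (2 * k) = ab_pow a b k"
  by (induction k) (auto simp: ab_pow_Suc)

lemma interleave_replicate_append:
  "interleave (replicate i a @ xs) (replicate i b @ ys) = ab_pow a b i @ interleave xs ys"
  by (induction i) (auto simp: ab_pow_def)

lemma interleave_replicate: "interleave (replicate k a) (replicate k b) = ab_pow a b k"
  using interleave_replicate_append[of k a "[]" b "[]"] by simp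

definition arrange :: "letter \<Rightarrow> letter multiset \<Rightarrow> letter list" where
  "arrange g M = replicate (count M (nxt g)) (nxt g) @ replicate (count M (prv g)) (prv g)"

lemma arrange_empty [simp]: "arrange g {#} = []"
  by (simp add: arrange_def)

lemma arrange_const: "set_mset M \<subseteq> {a} \<Longrightarrow> a \<noteq> g \<Longrightarrow> arrange g M = replicate (size M) a"
proof -
  assume M: "set_mset M \<subseteq> {a}" and a: "a \<noteq> g"
  have M': "M = replicate_mset (size M) a" using set_mset_subset_singletonD[OF M] .
  have "a = nxt g \<or> a = prv g" using a letter_cases3[of g a] by auto
  then show ?thesis by (subst (1 2) M') (auto simp: arrange_def)
qed

lemma size_avoiding: "g \<notin># E \<Longrightarrow> size E = count E (nxt g) + count E (prv g)"
proof (induction E)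
  case (add a E)
  then have "a = nxt g \<or> a = prv g" using letter_cases3[of g a] by auto
  with add show ?case by auto
qed simp

definition normal_word :: "label \<Rightarrow> letter list" where
  "normal_word L = (if \<exists>g. set_mset (fst L) \<subseteq> {g} \<and> g \<notin># snd L
     then (let g = SOME g. set_mset (fst L) \<subseteq> {g} \<and> g \<notin># snd L
           in interleave (replicate (size (fst L)) g) (arrange g (snd L)))
     else (let d = SOME d. set_mset (snd L) \<subseteq> {d} \<and> d \<notin># fst L
           in interleave (arrange d (fst L)) (replicate (size (snd L)) d)))"

lemma normal_word_empty: "normal_word ({#}, {#}) = []"
  by (simp add: normal_word_def)

lemma normal_word_odd_const:
  assumes Mo: "Mo \<noteq> {#}" "set_mset Mo \<subseteq> {g}" and E: "g \<notin># E"
  shows "normal_word (Mo, E) = interleave (replicate (size Mo) g) (arrange g E)"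
proof -
  have "(SOME g. set_mset Mo \<subseteq> {g} \<and> g \<notin># E) = g"
  proof (rule some_equality)
    fix g' assume "set_mset Mo \<subseteq> {g'} \<and> g' \<notin># E"
    then show "g' = g" using Mo by (metis set_mset_eq_empty_iff subset_singletonD singleton_inject)
  qed (use Mo E in simp)
  then show ?thesis using Mo E by (auto simp: normal_word_def)
qed

lemma normal_word_even_const:
  assumes E: "E \<noteq> {#}" "set_mset E \<subseteq> {d}" and Mo: "d \<notin># Mo"
  shows "normal_word (Mo, E) = interleave (arrange d Mo) (replicate (size E) d)"
proof (cases "Mo = {#}")
  case True
  then show ?thesis using E Mo by (auto simp: normal_word_def Let_def arrange_def)
next
  case False
  have dE: "set_mset E = {d}" using E by (metis set_mset_eq_empty_iff subset_singletonD)
  show ?thesis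
  proof (cases "\<exists>g. set_mset Mo \<subseteq> {g} \<and> g \<notin># E")
    case True
    then obtain g where g: "set_mset Mo \<subseteq> {g}" "g \<notin># E" by blast
    then have "g \<noteq> d" using dE by auto
    then show ?thesis using normal_word_odd_const[OF False g] arrange_const[OF E(2)] arrange_const[OF g(1)] dE
      by simp
  next
    case False
    have "(SOME d'. set_mset E \<subseteq> {d'} \<and> d' \<notin># Mo) = d"
    proof (rule some_equality)
      fix d' assume "set_mset E \<subseteq> {d'} \<and> d' \<notin># Mo"
      then show "d' = d" using dE by auto
    qed (use E Mo in simp)
    then show ?thesis using False by (auto simp: normal_word_def Let_def)
  qed
qed

lemma normal_word_even_pair:
  assumes Mo: "set_mset Mo \<subseteq> {g}" "Mo \<noteq> {#}" and E: "g \<notin># E" and s: "size Mo = size E"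
  shows "normal_word (Mo, E) = ab_pow g (nxt g) (count E (nxt g)) @ ab_pow g (prv g) (count E (prv g))"
    and "normal_word (E, Mo) = ab_pow (nxt g) g (count E (nxt g)) @ ab_pow (prv g) g (count E (prv g))"
proof -
  let ?i = "count E (nxt g)" and ?j = "count E (prv g)"
  have "size Mo = ?i + ?j" using s size_avoiding[OF E] by simp
  then have rg: "replicate (size Mo) g = replicate ?i g @ replicate ?j g" by (simp add: replicate_add)
  have sr: "arrange g E = replicate ?i (nxt g) @ replicate ?j (prv g)" by (simp add: arrange_def)
  show "normal_word (Mo, E) = ab_pow g (nxt g) ?i @ ab_pow g (prv g) ?j"
    using normal_word_odd_const[OF Mo(2) Mo(1) E]
    unfolding rg sr interleave_replicate_append interleave_replicate by simp
  show "normal_word (E, Mo) = ab_pow (nxt g) g ?i @ ab_pow (prv g) g ?j"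
    using normal_word_even_const[OF Mo(2) Mo(1) E]
    unfolding rg sr interleave_replicate_append interleave_replicate by simp
qed

lemma dvd_counts_even_label:
  assumes g: "set_mset Mo \<subseteq> {g}" "g \<notin># E" and s: "size Mo = size E"
    and d: "(n::nat) dvd count E (nxt g)" "n dvd count E (prv g)"
  shows "n dvd count Mo a" and "n dvd count E a"
proof -
  have "count E g = 0" using g(2) by (simp add: not_in_iff)
  moreover have "a = g \<or> a = nxt g \<or> a = prv g" using letter_cases3[of a g] by auto
  ultimately show "n dvd count E a" using d by auto
  have "n dvd size Mo" using d s size_avoiding[OF g(2)] by simp
  moreover have "count Mo a = (if a = g then size Mo else 0)"
    using set_mset_subset_singletonD[OF g(1)] by (metis count_replicate_mset)
  ultimately show "n dvd count Mo a" by simp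
qed

section \<open>The defining relations of \<open>M\<^sub>t\<close>\<close>

definition M_rels :: "complex \<Rightarrow> complex \<Rightarrow> nc set" where
  "M_rels \<omega> t = {nc_mul x x, nc_mul y y, nc_mul z z, rel \<omega> (\<omega>^2) t, rel (\<omega>^2) \<omega> t, gT t}"

lemma I_M_eq: "I_M \<omega> t = nc_ideal (M_rels \<omega> t)"
  by (simp add: I_M_def M_rels_def)

lemma rel_apply:
  "rel a b t w = (if w = [Z,X,Y] then 1 else if w = [X,Y,Z] then a else if w = [Y,Z,X] then b
     else if w = [Y,X,Z] then t else if w = [Z,Y,X] then t * a else if w = [X,Z,Y] then t * b else 0)"
  by (simp add: rel_def nc_sum_def mon3_def nc_add_def nc_smult_def nc_mono_def nc_zero_def)

lemma nc_pair_rel: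
  "nc_pair \<psi> (rel a b c) = \<psi> [Z,X,Y] + a * \<psi> [X,Y,Z] + b * \<psi> [Y,Z,X] + c * \<psi> [Y,X,Z]
     + c * a * \<psi> [Z,Y,X] + c * b * \<psi> [X,Z,Y]"
  unfolding rel_def nc_sum_def mon3_def
  by (simp add: nc_pair_add nc_pair_smult nc_pair_mono nc_pair_zero nc_poly_add nc_poly_smult nc_poly_mono nc_poly_zero)

definition cyc_rel :: "complex \<Rightarrow> letter \<Rightarrow> nc" where
  "cyc_rel q a = nc_diff (nc_mono [a, nxt a, nxt (nxt a)]) (nc_smult q (nc_mono [nxt (nxt a), nxt a, a]))"

text \<open>A discrete Fourier transform over the cube roots of unity: suitable combinations of the
  three relations isolate \<open>a (a+1) (a+2) + t (a+2) (a+1) a\<close> for each letter \<open>a\<close>.\<close>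

lemma cyc_rel_combinations:
  fixes \<omega> t :: complex
  assumes w: "\<omega>^2 + \<omega> + 1 = 0"
  shows "nc_smult 3 (cyc_rel (-t) X) =
      nc_add (nc_add (nc_smult (\<omega>^2) (rel \<omega> (\<omega>^2) t)) (nc_smult \<omega> (rel (\<omega>^2) \<omega> t))) (gT t)"
    and "nc_smult 3 (cyc_rel (-t) Y) =
      nc_add (nc_add (nc_smult \<omega> (rel \<omega> (\<omega>^2) t)) (nc_smult (\<omega>^2) (rel (\<omega>^2) \<omega> t))) (gT t)"
    and "nc_smult 3 (cyc_rel (-t) Z) =
      nc_add (nc_add (nc_smult 1 (rel \<omega> (\<omega>^2) t)) (nc_smult 1 (rel (\<omega>^2) \<omega> t))) (gT t)"
proof -
  have w3: "\<omega>^3 = 1" using w by algebra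
  note defs = rel_apply cyc_rel_def gT_def nc_add_def nc_smult_def nc_diff_def nc_mono_def power2_eq_square
  show "nc_smult 3 (cyc_rel (-t) X) = nc_add (nc_add (nc_smult (\<omega>^2) (rel \<omega> (\<omega>^2) t)) (nc_smult \<omega> (rel (\<omega>^2) \<omega> t))) (gT t)"
    by (rule ext) (auto simp: defs algebra_simps; use w w3 in algebra)
  show "nc_smult 3 (cyc_rel (-t) Y) = nc_add (nc_add (nc_smult \<omega> (rel \<omega> (\<omega>^2) t)) (nc_smult (\<omega>^2) (rel (\<omega>^2) \<omega> t))) (gT t)"
    by (rule ext) (auto simp: defs algebra_simps; use w w3 in algebra)
  show "nc_smult 3 (cyc_rel (-t) Z) = nc_add (nc_add (nc_smult 1 (rel \<omega> (\<omega>^2) t)) (nc_smult 1 (rel (\<omega>^2) \<omega> t))) (gT t)"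
    by (rule ext) (auto simp: defs algebra_simps; use w w3 in algebra)
qed

lemma cyc_rel_in_ideal:
  fixes \<omega> t :: complex
  assumes w: "\<omega>^2 + \<omega> + 1 = 0"
  shows "cyc_rel (-t) a \<in> nc_ideal {rel \<omega> (\<omega>^2) t, rel (\<omega>^2) \<omega> t, gT t}"
proof -
  let ?R = "{rel \<omega> (\<omega>^2) t, rel (\<omega>^2) \<omega> t, gT t}"
  obtain c1 c2 where c: "nc_smult 3 (cyc_rel (-t) a) =
      nc_add (nc_add (nc_smult c1 (rel \<omega> (\<omega>^2) t)) (nc_smult c2 (rel (\<omega>^2) \<omega> t))) (gT t)"
    using cyc_rel_combinations[OF w] by (cases a) fastforce+
  have "nc_smult 3 (cyc_rel (-t) a) \<in> nc_ideal ?R"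
    unfolding c by (intro nc_ideal.add nc_ideal.smult nc_ideal_gen_mem) auto
  then have "nc_smult (1/3) (nc_smult 3 (cyc_rel (-t) a)) \<in> nc_ideal ?R" by (rule nc_ideal.smult)
  then show ?thesis by (simp add: nc_smult_def fun_eq_iff)
qed

locale Mt =
  fixes \<omega> t :: complex and n :: nat
  assumes omega_cube: "\<omega> ^ 3 = 1" and omega_ne_1: "\<omega> \<noteq> 1" and t_nonzero: "t \<noteq> 0"
    and n_pos: "n > 0" and t_pow_n: "(- t) ^ n = 1" and t_primitive: "\<forall>k. 0 < k \<and> k < n \<longrightarrow> (- t) ^ k \<noteq> 1"
begin

abbreviation I :: "nc set" where "I \<equiv> nc_ideal (M_rels \<omega> t)"
abbreviation cong :: "nc \<Rightarrow> nc \<Rightarrow> bool" where "cong \<equiv> nc_cong (M_rels \<omega> t)"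

definition q :: complex where "q = - t"

lemma q_nonzero: "q \<noteq> 0"
  using t_nonzero by (simp add: q_def)

lemma q_pow_n: "q ^ n = 1"
  using t_pow_n by (simp add: q_def)

lemma q_pow_eq_1_iff: "q ^ k = 1 \<longleftrightarrow> n dvd k"
proof
  assume qk: "q ^ k = 1"
  have "(q ^ n) ^ (k div n) * q ^ (k mod n) = q ^ k"
    by (simp only: power_mult[symmetric] power_add[symmetric] mult_div_mod_eq)
  then have "q ^ (k mod n) = 1" using qk q_pow_n by simp
  then have "k mod n = 0" using t_primitive n_pos by (auto simp: q_def)
  then show "n dvd k" by auto
qed (auto simp: q_pow_n power_mult elim!: dvdE)

lemma omega_root: "\<omega>^2 + \<omega> + 1 = 0"
proof -
  have "(\<omega> - 1) * (\<omega>^2 + \<omega> + 1) = \<omega>^3 - 1" by (simp add: algebra_simps power2_eq_square power3_eq_cube)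
  then show ?thesis using omega_cube omega_ne_1 by simp
qed

lemma M_rels_poly: "M_rels \<omega> t \<subseteq> nc_poly"
proof -
  have "rel a b c \<in> nc_poly" for a b c
    unfolding rel_def nc_sum_def mon3_def by (simp add: nc_poly_add nc_poly_smult nc_poly_zero nc_poly_mono)
  then show ?thesis by (simp add: M_rels_def x_def y_def z_def nc_var_def nc_mul_mono_mono nc_poly_mono gT_def)
qed

definition word_cong :: "letter list \<Rightarrow> complex \<Rightarrow> letter list \<Rightarrow> bool" where
  "word_cong u c v \<longleftrightarrow> cong (nc_mono u) (nc_smult c (nc_mono v))"

definition null_word :: "letter list \<Rightarrow> bool" where
  "null_word u \<longleftrightarrow> nc_mono u \<in> I"

lemma null_word_square: "null_word [a, a]"
proof -
  have "nc_mono [a, a] \<in> M_rels \<omega> t"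
    by (cases a) (auto simp: M_rels_def x_def y_def z_def nc_var_def nc_mul_mono_mono)
  then show ?thesis by (simp add: null_word_def nc_ideal_gen_mem)
qed

lemma word_cong_rotate_nxt: "word_cong [a, nxt a, nxt (nxt a)] q [nxt (nxt a), nxt a, a]"
proof -
  have "cyc_rel q a \<in> I"
    using nc_ideal_mono[OF _ cyc_rel_in_ideal[OF omega_root]] by (auto simp: q_def M_rels_def)
  then show ?thesis by (simp add: word_cong_def nc_cong_def cyc_rel_def)
qed

lemma word_cong_context: "word_cong u c v \<Longrightarrow> word_cong (p @ u @ s) c (p @ v @ s)"
proof -
  have "nc_mul (nc_mul (nc_mono p) (nc_diff (nc_mono u) (nc_smult c (nc_mono v)))) (nc_mono s)
     = nc_diff (nc_mono (p @ u @ s)) (nc_smult c (nc_mono (p @ v @ s)))"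
    by (simp add: nc_mul_diff_left nc_mul_diff_right nc_mul_smult_left nc_mul_smult_right nc_mul_mono_mono)
  then show "word_cong u c v \<Longrightarrow> ?thesis"
    unfolding word_cong_def nc_cong_def by (metis nc_ideal_mul_left nc_ideal_mul_right nc_poly_mono)
qed

lemma null_word_context: "null_word u \<Longrightarrow> null_word (p @ u @ s)"
proof -
  assume "null_word u"
  then have "nc_mul (nc_mul (nc_mono p) (nc_mono u)) (nc_mono s) \<in> I"
    unfolding null_word_def by (intro nc_ideal_mul_right nc_ideal_mul_left nc_poly_mono)
  then show ?thesis by (simp add: null_word_def nc_mul_mono_mono)
qed

lemma word_cong_append_left: "word_cong u c v \<Longrightarrow> word_cong (p @ u) c (p @ v)"
  using word_cong_context[of u c v p "[]"] by simp

lemma word_cong_append_right: "word_cong u c v \<Longrightarrow> word_cong (u @ s) c (v @ s)"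
  using word_cong_context[of u c v "[]" s] by simp

lemma word_cong_Cons: "word_cong u c v \<Longrightarrow> word_cong (a # u) c (a # v)"
  using word_cong_append_left[of u c v "[a]"] by simp

lemma null_word_append_left: "null_word u \<Longrightarrow> null_word (p @ u)"
  using null_word_context[of u p "[]"] by simp

lemma null_word_append_right: "null_word u \<Longrightarrow> null_word (u @ s)"
  using null_word_context[of u "[]" s] by simp

lemma word_cong_refl: "word_cong u 1 u"
proof -
  have "nc_smult 1 (nc_mono u) = nc_mono u" by (simp add: fun_eq_iff nc_smult_def)
  then show ?thesis by (simp add: word_cong_def nc_cong_refl)
qed

lemma word_cong_trans: "word_cong u c v \<Longrightarrow> word_cong v d w \<Longrightarrow> word_cong u (c * d) w"
proof -
  have "nc_smult c (nc_smult d m) = nc_smult (c * d) m" for m by (simp add: fun_eq_iff nc_smult_def)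
  then show "word_cong u c v \<Longrightarrow> word_cong v d w \<Longrightarrow> ?thesis"
    unfolding word_cong_def by (metis nc_cong_smult nc_cong_trans)
qed

lemma word_cong_sym: "c \<noteq> 0 \<Longrightarrow> word_cong u c v \<Longrightarrow> word_cong v (1 / c) u"
proof -
  assume c: "c \<noteq> 0" and uv: "word_cong u c v"
  have "nc_smult (1 / c) (nc_smult c (nc_mono v)) = nc_mono v" using c by (simp add: fun_eq_iff nc_smult_def)
  then show ?thesis
    using nc_cong_smult[OF uv[unfolded word_cong_def], of "1 / c"] by (simp add: word_cong_def nc_cong_sym)
qed

lemma word_cong_null: "word_cong u c v \<Longrightarrow> null_word v \<Longrightarrow> null_word u"
proof -
  have "nc_mono u = nc_add (nc_diff (nc_mono u) (nc_smult c (nc_mono v))) (nc_smult c (nc_mono v))"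
    by (simp add: fun_eq_iff nc_diff_def nc_smult_def nc_add_def)
  then show "word_cong u c v \<Longrightarrow> null_word v \<Longrightarrow> null_word u"
    unfolding word_cong_def nc_cong_def null_word_def by (metis nc_ideal.add nc_ideal.smult)
qed

text \<open>This is \<open>\<kappa>(a,b)\<close>: for distinct letters the relations read \<open>abc = \<kappa>(a,b) cba\<close>.\<close>

definition swap_coeff :: "letter \<Rightarrow> letter \<Rightarrow> complex" where
  "swap_coeff a b = (if b = nxt a then q else 1 / q)"

lemma swap_coeff_pow_n: "swap_coeff a b ^ n = 1"
  using q_pow_n by (simp add: swap_coeff_def power_one_over)

lemma word_cong_rotate: "a \<noteq> b \<Longrightarrow> c \<noteq> a \<Longrightarrow> c \<noteq> b \<Longrightarrow> word_cong [a, b, c] (swap_coeff a b) [c, b, a]"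
proof -
  assume d: "a \<noteq> b" "c \<noteq> a" "c \<noteq> b"
  show ?thesis
  proof (cases "b = nxt a")
    case True
    then have "c = nxt (nxt a)" using d by (cases a; cases c; simp)
    then show ?thesis using True word_cong_rotate_nxt[of a] by (simp add: swap_coeff_def)
  next
    case False
    then have b: "b = prv a" using d letter_cases3[of a b] by auto
    then have c: "c = nxt a" using d by (cases a; cases c; simp)
    have "word_cong [c, b, a] q [a, b, c]" using word_cong_rotate_nxt[of c] b c by (simp add: nxt_nxt)
    then show ?thesis using False word_cong_sym q_nonzero by (simp add: swap_coeff_def)
  qed
qed

section \<open>Normal forms of words\<close>

text \<open>The letter \<open>e1\<close> travels through the odd positions past \<open>i\<close> copies of \<open>e2\<close>, using
  \<open>e1 \<gamma> e2 = \<kappa> e2 \<gamma> e1\<close> once per step.\<close>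

lemma word_cong_move:
  assumes "\<gamma> \<noteq> e1" "e2 \<noteq> e1" "e2 \<noteq> \<gamma>" "i \<le> k"
  shows "word_cong (interleave (e1 # replicate i e2 @ R) (replicate k \<gamma>)) (swap_coeff e1 \<gamma> ^ i)
                   (interleave (replicate i e2 @ e1 # R) (replicate k \<gamma>))"
  using assms
proof (induction i arbitrary: k)
  case 0 then show ?case by (simp add: word_cong_refl)
next
  case (Suc i)
  then obtain k' where k: "k = Suc k'" and ik: "i \<le> k'" by (cases k) auto
  let ?Y = "replicate i e2 @ R" and ?C = "replicate k' \<gamma>"
  have "word_cong [e1, \<gamma>, e2] (swap_coeff e1 \<gamma>) [e2, \<gamma>, e1]"
    using Suc.prems by (intro word_cong_rotate) auto
  then have "word_cong ([e1, \<gamma>, e2] @ interleave ?C ?Y) (swap_coeff e1 \<gamma>) ([e2, \<gamma>, e1] @ interleave ?C ?Y)"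
    by (rule word_cong_append_right)
  moreover have "word_cong ([e2, \<gamma>] @ interleave (e1 # ?Y) ?C) (swap_coeff e1 \<gamma> ^ i)
                            ([e2, \<gamma>] @ interleave (replicate i e2 @ e1 # R) ?C)"
    using Suc.IH[OF Suc.prems(1-3) ik] by (intro word_cong_append_left) simp
  ultimately show ?case using k by (simp add: word_cong_trans[where d = "swap_coeff e1 \<gamma> ^ i", simplified])
qed

text \<open>Pushing the first \<open>a\<close> to the right through \<open>bc\<close>-blocks brings it next to the last \<open>a\<close>.\<close>

lemma null_word_ab_pow_between:
  assumes "b \<noteq> a" "c \<noteq> a" "c \<noteq> b"
  shows "null_word (a # ab_pow b c i @ [a])"
proof (induction i)
  case 0 then show ?case using null_word_square by simp
next
  case (Suc i)
  have "word_cong [a, b, c] (swap_coeff a b) [c, b, a]" using assms by (intro word_cong_rotate) auto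
  then have "word_cong ([a, b, c] @ ab_pow b c i @ [a]) (swap_coeff a b) ([c, b] @ (a # ab_pow b c i @ [a]))"
    using word_cong_append_right by fastforce
  moreover have "null_word ([c, b] @ (a # ab_pow b c i @ [a]))" using Suc by (intro null_word_append_left)
  ultimately show ?case by (simp add: ab_pow_Suc word_cong_null)
qed

abbreviation cons_normal :: "letter \<Rightarrow> label \<Rightarrow> bool" where
  "cons_normal e L \<equiv>
     (admissible (label_cons e L) \<and>
        word_cong (e # normal_word L) (q ^ count (snd L) (prv e)) (normal_word (label_cons e L))) \<or>
     (\<not> admissible (label_cons e L) \<and> null_word (e # normal_word L))"

lemma cons_normal_odd_const:
  assumes Mo: "Mo \<noteq> {#}" "set_mset Mo \<subseteq> {g}" and g: "g \<notin># E" and bal: "balanced (Mo, E)"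
  shows "cons_normal e (Mo, E)"
proof -
  have nw: "normal_word (Mo, E) = interleave (replicate (size Mo) g) (arrange g E)"
    using normal_word_odd_const[OF Mo g] .
  consider "e = g" | "e = nxt g" | "e = prv g" using letter_cases3[of g e] by auto
  then show ?thesis
  proof cases
    case 1
    have "g \<in># Mo" using Mo by (metis set_mset_eq_empty_iff subset_singletonD singletonI)
    then have "\<not> admissible (label_cons e (Mo, E))"
      using 1 by (intro not_admissible_common[of g]) (auto simp: label_cons_def)
    moreover obtain k where "size Mo = Suc k" using Mo by (cases "size Mo") auto
    then have "e # normal_word (Mo, E) = [g, g] @ interleave (arrange g E) (replicate k g)"
      using nw 1 by simp
    then have "null_word (e # normal_word (Mo, E))"
      using null_word_append_right[OF null_word_square] by metis
    ultimately show ?thesis by simp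
  next
    case 2
    have "arrange g (add_mset e E) = e # arrange g E" "count E (prv e) = 0"
      using 2 g by (simp_all add: arrange_def not_in_iff)
    moreover have "admissible (label_cons e (Mo, E))"
      using 2 Mo g unfolding admissible_def label_cons_def by auto
    ultimately show ?thesis
      using 2 Mo g nw normal_word_even_const[of Mo g "add_mset e E"]
      by (simp add: label_cons_def word_cong_refl)
  next
    case 3
    let ?i = "count E (nxt g)" and ?j = "count E (prv g)"
    have "?i \<le> size Mo" using size_avoiding[OF g] bal by (simp add: balanced_def)
    then have "word_cong (interleave (e # replicate ?i (nxt g) @ replicate ?j (prv g)) (replicate (size Mo) g))
                 (swap_coeff e g ^ ?i) (interleave (replicate ?i (nxt g) @ e # replicate ?j (prv g)) (replicate (size Mo) g))"
      using 3 by (intro word_cong_move) auto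
    moreover have "swap_coeff e g = q" "count E (prv e) = ?i"
      using 3 by (simp_all add: swap_coeff_def prv_prv)
    moreover have "arrange g (add_mset e E) = replicate ?i (nxt g) @ e # replicate ?j (prv g)"
      using 3 by (simp add: arrange_def)
    moreover have "admissible (label_cons e (Mo, E))"
      using 3 Mo g unfolding admissible_def label_cons_def by auto
    ultimately show ?thesis
      using 3 Mo g nw normal_word_even_const[of Mo g "add_mset e E"]
      by (simp add: label_cons_def arrange_def)
  qed
qed

lemma cons_normal_even_const:
  assumes E: "set_mset E \<subseteq> {d}" "d \<notin># Mo" and mixed: "nxt d \<in># Mo" "prv d \<in># Mo"
    and bal: "balanced (Mo, E)"
  shows "cons_normal e (Mo, E)"
proof -
  let ?i = "count Mo (nxt d)" and ?j = "count Mo (prv d)"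
  have sz: "size Mo = ?i + ?j" using size_avoiding[OF E(2)] .
  have i1: "?i \<noteq> 0" and j1: "?j \<noteq> 0" using mixed by auto
  have "2 \<le> size Mo" using sz i1 j1 by linarith
  then have ENE: "E \<noteq> {#}" using bal by (auto simp: balanced_def)
  have nw: "normal_word (Mo, E) = interleave (arrange d Mo) (replicate (size E) d)"
    using normal_word_even_const[OF ENE E] .
  have dE: "d \<in># E" using E ENE by (metis set_mset_eq_empty_iff subset_singletonD singletonI)
  have not_adm: "\<not> admissible (label_cons e (Mo, E))" if "e \<noteq> d"
    using not_admissible_cons_mixed[OF dE mixed that] .
  consider "e = d" | "e = nxt d" | "e = prv d" using letter_cases3[of d e] by auto
  then show ?thesis
  proof cases
    case 1
    have "admissible (label_cons e (Mo, E))" using 1 E unfolding admissible_def label_cons_def by auto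
    moreover have "count E (prv e) = 0" using 1 E by (metis count_eq_zero_iff nxt_neq(2) singletonD subsetD)
    moreover have "normal_word (label_cons e (Mo, E)) = e # normal_word (Mo, E)"
      using 1 E nw normal_word_odd_const[of "add_mset d E" d Mo] by (simp add: label_cons_def)
    ultimately show ?thesis by (simp add: word_cong_refl)
  next
    case 2
    obtain i' where i': "?i = Suc i'" using i1 by (cases ?i) auto
    have "e # normal_word (Mo, E) = [e, e] @ interleave (replicate (size E) d) (replicate i' (nxt d) @ replicate ?j (prv d))"
      using nw 2 i' by (simp add: arrange_def)
    then have "null_word (e # normal_word (Mo, E))"
      using null_word_append_right[OF null_word_square] by metis
    then show ?thesis using not_adm 2 by simp
  next
    case 3
    obtain j' where j': "?j = Suc j'" using j1 by (cases ?j) auto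
    have "?i \<le> size E" using sz j' bal by (simp add: balanced_def)
    then have "replicate (size E) d = replicate ?i d @ replicate (size E - ?i) d"
      by (metis le_add_diff_inverse replicate_add)
    then have "normal_word (Mo, E) = ab_pow (nxt d) d ?i @ interleave (replicate ?j (prv d)) (replicate (size E - ?i) d)"
      using nw by (simp only: arrange_def interleave_replicate_append)
    then have "e # normal_word (Mo, E) =
        (e # ab_pow (nxt d) d ?i @ [e]) @ interleave (replicate (size E - ?i) d) (replicate j' (prv d))"
      using j' 3 by simp
    moreover have "null_word (e # ab_pow (nxt d) d ?i @ [e])" using 3 by (intro null_word_ab_pow_between) auto
    ultimately have "null_word (e # normal_word (Mo, E))" using null_word_append_right by metis
    then show ?thesis using not_adm 3 by simp
  qed
qed

lemma cons_normal:
  assumes adm: "admissible L" and bal: "balanced L"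
  shows "cons_normal e L"
proof -
  obtain Mo E where L: "L = (Mo, E)" by (cases L)
  show ?thesis
  proof (cases "Mo = {#}")
    case True
    then have "E = {#}" using bal L by (simp add: balanced_def)
    then show ?thesis
      using True L normal_word_odd_const[of "{#e#}" e "{#}"]
      by (simp add: admissible_def label_cons_def normal_word_empty word_cong_refl)
  next
    case MoNE: False
    show ?thesis
    proof (cases "\<exists>g. set_mset Mo \<subseteq> {g} \<and> g \<notin># E")
      case True
      then show ?thesis using cons_normal_odd_const[OF MoNE] bal L by blast
    next
      case False
      then obtain d where d: "set_mset E \<subseteq> {d}" "d \<notin># Mo" using adm L unfolding admissible_def by auto
      have Mo: "a = nxt d \<or> a = prv d" if "a \<in># Mo" for a
        using that d(2) letter_cases3[of d a] by auto
      have "nxt d \<in># Mo"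
      proof (rule ccontr)
        assume "nxt d \<notin># Mo"
        then have "set_mset Mo \<subseteq> {prv d} \<and> prv d \<notin># E" using Mo d(1) by fastforce
        then show False using False by blast
      qed
      moreover have "prv d \<in># Mo"
      proof (rule ccontr)
        assume "prv d \<notin># Mo"
        then have "set_mset Mo \<subseteq> {nxt d} \<and> nxt d \<notin># E" using Mo d(1) by fastforce
        then show False using False by blast
      qed
      ultimately show ?thesis using cons_normal_even_const[OF d] bal L by blast
    qed
  qed
qed

lemma word_normal_form:
  "(admissible (label w) \<and> word_cong w (q ^ invs w) (normal_word (label w))) \<or>
   (\<not> admissible (label w) \<and> null_word w)"
proof (induction w)
  case Nil then show ?case by (simp add: label_Nil invs_Nil admissible_empty normal_word_empty word_cong_refl)
next
  case (Cons e w)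
  show ?case
  proof (cases "admissible (label w)")
    case True
    with Cons have "word_cong (e # w) (q ^ invs w) (e # normal_word (label w))"
      by (simp add: word_cong_Cons)
    with cons_normal[OF True balanced_label, of e] show ?thesis
      by (auto simp: label_Cons invs_Cons power_add mult.commute dest: word_cong_trans word_cong_null)
  next
    case False
    with Cons have "null_word ([e] @ w)" by (intro null_word_append_left) simp
    then show ?thesis using False admissible_label_cons_imp[of e "label w"] by (auto simp: label_Cons)
  qed
qed

section \<open>Coordinates with respect to the normal words\<close>

text \<open>That these functionals kill \<open>I\<close> shows that the normal words of admissible labels are
  linearly independent in \<open>M\<^sub>t\<close>.\<close>

definition nf_dual :: "label \<Rightarrow> letter list \<Rightarrow> complex" where
  "nf_dual L w = (if label w = L \<and> admissible L then q ^ invs w else 0)"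

lemma nf_dual_square: "nf_dual L (u @ [a, a] @ v) = 0"
proof -
  have "a \<in># fst (label (u @ [a, a] @ v))" "a \<in># snd (label (u @ [a, a] @ v))"
    by (auto simp: label_def odds_append evens_append)
  then show ?thesis unfolding nf_dual_def using not_admissible_common by metis
qed

lemma nf_dual_rotate:
  assumes "b = nxt a" "c = nxt b"
  shows "nf_dual L (u @ [a, b, c] @ v) = q * nf_dual L (u @ [c, b, a] @ v)"
  using invs_rotate3[OF assms, of u v] unfolding nf_dual_def label_rotate3 by simp

lemma nf_dual_ideal_eq_0: "a \<in> I \<Longrightarrow> nc_pair (nf_dual L) a = 0"
proof (rule nc_pair_ideal_eq_0[OF M_rels_poly])
  fix g u v assume g: "g \<in> M_rels \<omega> t"
  let ?\<psi> = "\<lambda>w. nf_dual L (u @ w @ v)"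
  have "?\<psi> [Z,X,Y] = q * ?\<psi> [Y,X,Z]" "?\<psi> [X,Y,Z] = q * ?\<psi> [Z,Y,X]" "?\<psi> [Y,Z,X] = q * ?\<psi> [X,Z,Y]"
    using nf_dual_rotate[of X Z Y L u v] nf_dual_rotate[of Y X Z L u v] nf_dual_rotate[of Z Y X L u v] by simp_all
  then have "nc_pair ?\<psi> (rel a b t) = 0" for a b
    unfolding nc_pair_rel by (simp add: q_def algebra_simps)
  moreover have "nc_pair ?\<psi> (nc_mono [e, e]) = 0" for e
    using nf_dual_square[of L u e v] by (simp add: nc_pair_mono)
  ultimately show "nc_pair ?\<psi> g = 0"
    using g by (auto simp: M_rels_def x_def y_def z_def nc_var_def nc_mul_mono_mono gT_def)
qed

lemma cong_mono_normal_word: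
  "cong (nc_mono w) (nc_smult (nf_dual (label w) w) (nc_mono (normal_word (label w))))"
  using word_normal_form[of w]
proof
  assume "admissible (label w) \<and> word_cong w (q ^ invs w) (normal_word (label w))"
  then show ?thesis by (simp add: nf_dual_def word_cong_def)
next
  assume "\<not> admissible (label w) \<and> null_word w"
  moreover have "nc_smult 0 (nc_mono (normal_word (label w))) = nc_zero"
    by (simp add: fun_eq_iff nc_smult_def nc_zero_def)
  ultimately show ?thesis by (simp add: nf_dual_def null_word_def nc_cong_zero_iff)
qed

definition nf_coeff :: "nc \<Rightarrow> label \<Rightarrow> complex" where
  "nf_coeff f L = nc_pair (nf_dual L) f"

lemma nf_coeff_nonzero_imp:
  assumes "nf_coeff f L \<noteq> 0"
  shows "admissible L" and "L \<in> label ` nc_supp f" and "balanced L"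
proof -
  have "\<exists>w\<in>nc_supp f. nf_dual L w \<noteq> 0"
  proof (rule ccontr)
    assume "\<not> (\<exists>w\<in>nc_supp f. nf_dual L w \<noteq> 0)"
    then have "nc_pair (nf_dual L) f = 0" unfolding nc_pair_def by (intro sum.neutral) auto
    then show False using assms by (simp add: nf_coeff_def)
  qed
  then obtain w where "w \<in> nc_supp f" "label w = L" "admissible L" by (auto simp: nf_dual_def split: if_splits)
  then show "admissible L" "L \<in> label ` nc_supp f" "balanced L" using balanced_label[of w] by auto
qed

lemma cong_normal_expansion_words:
  assumes f: "f \<in> nc_poly"
  shows "cong f (nc_setsum (\<lambda>w. nc_smult (f w * nf_dual (label w) w) (nc_mono (normal_word (label w)))) (nc_supp f))"
proof -
  have "finite (nc_supp f)" using f by (simp add: nc_poly_iff)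
  then have "cong (nc_setsum (\<lambda>w. nc_smult (f w) (nc_mono w)) (nc_supp f))
      (nc_setsum (\<lambda>w. nc_smult (f w) (nc_smult (nf_dual (label w) w) (nc_mono (normal_word (label w))))) (nc_supp f))"
    by (intro nc_cong_setsum nc_cong_smult cong_mono_normal_word)
  moreover have "nc_smult (f w) (nc_smult c m) = nc_smult (f w * c) m" for w c m
    by (simp add: fun_eq_iff nc_smult_def)
  ultimately show ?thesis using nc_poly_expand[OF f] by simp
qed

lemma cong_normal_expansion:
  assumes f: "f \<in> nc_poly"
  shows "cong f (nc_setsum (\<lambda>L. nc_smult (nf_coeff f L) (nc_mono (normal_word L))) (label ` nc_supp f))"
proof -
  have fin: "finite (nc_supp f)" using f by (simp add: nc_poly_iff)
  have "nc_setsum (\<lambda>w. nc_smult (f w * nf_dual (label w) w) (nc_mono (normal_word (label w)))) (nc_supp f) v =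
        nc_setsum (\<lambda>L. nc_smult (nf_coeff f L) (nc_mono (normal_word L))) (label ` nc_supp f) v" for v
  proof -
    have "nc_setsum (\<lambda>w. nc_smult (f w * nf_dual (label w) w) (nc_mono (normal_word (label w)))) (nc_supp f) v
       = (\<Sum>L\<in>label ` nc_supp f. \<Sum>w\<in>{w\<in>nc_supp f. label w = L}. f w * nf_dual L w * nc_mono (normal_word L) v)"
      unfolding nc_setsum_def nc_smult_def by (subst sum.image_gen[OF fin]) (auto intro!: sum.cong)
    also have "\<dots> = (\<Sum>L\<in>label ` nc_supp f. (\<Sum>w\<in>{w\<in>nc_supp f. label w = L}. f w * nf_dual L w) * nc_mono (normal_word L) v)"
      by (simp add: sum_distrib_right)
    also have "\<dots> = (\<Sum>L\<in>label ` nc_supp f. (\<Sum>w\<in>nc_supp f. f w * nf_dual L w) * nc_mono (normal_word L) v)"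
      using fin by (intro sum.cong refl arg_cong2[where f = "(*)"] sum.mono_neutral_left) (auto simp: nf_dual_def)
    finally show ?thesis by (simp add: nc_setsum_def nc_smult_def nf_coeff_def nc_pair_def)
  qed
  then have "nc_setsum (\<lambda>w. nc_smult (f w * nf_dual (label w) w) (nc_mono (normal_word (label w)))) (nc_supp f) =
        nc_setsum (\<lambda>L. nc_smult (nf_coeff f L) (nc_mono (normal_word L))) (label ` nc_supp f)" ..
  then show ?thesis using cong_normal_expansion_words[OF f] by simp
qed

section \<open>Constraints on central elements\<close>

text \<open>Comparing the coordinates of \<open>f e\<close> and \<open>e f\<close>: appending \<open>e\<close> on either side moves the
  coordinate at a label to a neighbouring label, with a power of \<open>q\<close>.\<close>

lemma central_mod_coordinates:
  assumes f: "f \<in> nc_poly" and c: "central_mod I f"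
  shows "(\<Sum>w\<in>nc_supp f. f w * nf_dual L (w @ [e])) = (\<Sum>w\<in>nc_supp f. f w * nf_dual L (e # w))"
proof -
  have "nc_diff (nc_mul f (nc_mono [e])) (nc_mul (nc_mono [e]) f) \<in> I"
    using c nc_poly_mono by (simp add: central_mod_def)
  then have "nc_pair (nf_dual L) (nc_diff (nc_mul f (nc_mono [e])) (nc_mul (nc_mono [e]) f)) = 0"
    by (rule nf_dual_ideal_eq_0)
  then show ?thesis
    using f by (simp add: nc_pair_diff nc_poly_mul nc_poly_mono nc_pair_mul_mono_right nc_pair_mul_mono_left)
qed

lemma sum_nf_dual_shift:
  assumes lab: "\<And>w. label (h w) = L \<longleftrightarrow> label w = L'"
    and inv: "\<And>w. label w = L' \<Longrightarrow> invs (h w) = invs w + k"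
    and adm: "admissible L \<Longrightarrow> admissible L'"
  shows "(\<Sum>w\<in>nc_supp f. f w * nf_dual L (h w)) = (if admissible L then q ^ k * nf_coeff f L' else 0)"
proof -
  have "f w * nf_dual L (h w) = (if admissible L then q ^ k * (f w * nf_dual L' w) else 0)" for w
    using lab[of w] inv[of w] adm by (auto simp: nf_dual_def power_add)
  then show ?thesis by (simp add: nf_coeff_def nc_pair_def sum_distrib_left)
qed

lemma sum_nf_dual_snoc_even:
  assumes s: "size M1 = size M2"
  shows "(\<Sum>w\<in>nc_supp f. f w * nf_dual (add_mset e M1, M2) (w @ [e])) =
    (if admissible (add_mset e M1, M2) then q ^ count M1 (nxt e) * nf_coeff f (M1, M2) else 0)"
proof (rule sum_nf_dual_shift)
  fix w
  show "label (w @ [e]) = (add_mset e M1, M2) \<longleftrightarrow> label w = (M1, M2)"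
  proof (cases "even (length w)")
    case False
    then have "size (fst (label w)) = Suc (size (snd (label w)))"
      using balanced_label[of w] even_length_iff_label[of w] by (auto simp: balanced_def)
    then show ?thesis using False s by (auto simp: label_snoc prod_eq_iff)
  qed (use s even_length_iff_label[of w] in \<open>auto simp: label_snoc prod_eq_iff\<close>)
  show "label w = (M1, M2) \<Longrightarrow> invs (w @ [e]) = invs w + count M1 (nxt e)"
    using s even_length_iff_label[of w] by (simp add: invs_snoc)
qed (auto intro: admissible_subset)

lemma sum_nf_dual_snoc_odd:
  assumes s: "size M1 = Suc (size M2)"
  shows "(\<Sum>w\<in>nc_supp f. f w * nf_dual (M1, add_mset e M2) (w @ [e])) =
    (if admissible (M1, add_mset e M2) then q ^ count M2 (nxt e) * nf_coeff f (M1, M2) else 0)"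
proof (rule sum_nf_dual_shift)
  fix w
  show "label (w @ [e]) = (M1, add_mset e M2) \<longleftrightarrow> label w = (M1, M2)"
  proof (cases "even (length w)")
    case True
    then have "size (fst (label w)) = size (snd (label w))" using even_length_iff_label[of w] by auto
    then show ?thesis using True s by (auto simp: label_snoc prod_eq_iff)
  qed (use s even_length_iff_label[of w] in \<open>auto simp: label_snoc prod_eq_iff\<close>)
  show "label w = (M1, M2) \<Longrightarrow> invs (w @ [e]) = invs w + count M2 (nxt e)"
    using s even_length_iff_label[of w] by (simp add: invs_snoc)
qed (auto intro: admissible_subset)

lemma sum_nf_dual_Cons:
  "(\<Sum>w\<in>nc_supp f. f w * nf_dual (add_mset e M2, M1) (e # w)) =
    (if admissible (add_mset e M2, M1) then q ^ count M2 (prv e) * nf_coeff f (M1, M2) else 0)"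
proof (rule sum_nf_dual_shift)
  show "admissible (add_mset e M2, M1) \<Longrightarrow> admissible (M1, M2)"
    using admissible_swap[of "(M1, M2)"] by (auto intro: admissible_subset)
qed (auto simp: label_Cons label_cons_def prod_eq_iff invs_Cons)

lemma sum_nf_dual_Cons_eq_0: "e \<notin># P \<Longrightarrow> (\<Sum>w\<in>nc_supp f. f w * nf_dual (P, Q) (e # w)) = 0"
  by (rule sum.neutral) (auto simp: nf_dual_def label_Cons label_cons_def)

lemma central_nf_coeff_odd:
  assumes f: "f \<in> nc_poly" and c: "central_mod I f" and s: "size Mo = Suc (size E)"
  shows "nf_coeff f (Mo, E) = 0"
proof (cases "admissible (Mo, E)")
  case True
  obtain e where e: "e \<notin># Mo" "admissible (Mo, add_mset e E)"
  proof (cases "\<exists>g. set_mset Mo \<subseteq> {g} \<and> g \<notin># E")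
    case True
    then obtain g where g: "set_mset Mo \<subseteq> {g}" "g \<notin># E" by blast
    then have "nxt g \<notin># Mo" "admissible (Mo, add_mset (nxt g) E)" unfolding admissible_def by auto
    then show ?thesis using that by blast
  next
    case False
    then obtain d where d: "set_mset E \<subseteq> {d}" "d \<notin># Mo" using True unfolding admissible_def by auto
    then have "admissible (Mo, add_mset d E)" unfolding admissible_def by auto
    then show ?thesis using that d by blast
  qed
  have "q ^ count E (nxt e) * nf_coeff f (Mo, E) = 0"
    using central_mod_coordinates[OF f c, of "(Mo, add_mset e E)" e]
      sum_nf_dual_snoc_odd[OF s, of f e] sum_nf_dual_Cons_eq_0[OF e(1), of f "add_mset e E"] e(2) by simp
  then show ?thesis using q_nonzero by simp
qed (use nf_coeff_nonzero_imp(1) in blast)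

lemma central_nf_coeff_even:
  assumes f: "f \<in> nc_poly" and c: "central_mod I f"
    and s: "size Mo = size E" and g: "set_mset Mo \<subseteq> {g}" "g \<notin># E"
  shows "nf_coeff f (E, Mo) = nf_coeff f (Mo, E)"
    and "q ^ count E (prv g) * nf_coeff f (Mo, E) = nf_coeff f (Mo, E)"
    and "q ^ count E (nxt g) * nf_coeff f (Mo, E) = nf_coeff f (Mo, E)"
proof -
  have c0: "count Mo (nxt g) = 0" "count Mo (prv g) = 0" "count E g = 0"
    using g by (auto simp: not_in_iff[symmetric])
  have "admissible (add_mset g Mo, E)" using g unfolding admissible_def by auto
  then show swap: "nf_coeff f (E, Mo) = nf_coeff f (Mo, E)"
    using central_mod_coordinates[OF f c, of "(add_mset g Mo, E)" g]
      sum_nf_dual_snoc_even[OF s, of f g] sum_nf_dual_Cons[of f g Mo E] c0 by simp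
  have "admissible (add_mset (nxt g) E, Mo)" using g unfolding admissible_def by auto
  then show "q ^ count E (prv g) * nf_coeff f (Mo, E) = nf_coeff f (Mo, E)"
    using central_mod_coordinates[OF f c, of "(add_mset (nxt g) E, Mo)" "nxt g"] swap
      sum_nf_dual_snoc_even[OF s[symmetric], of f "nxt g"] sum_nf_dual_Cons[of f "nxt g" E Mo] c0
    by (simp add: nxt_nxt)
  have "admissible (add_mset (prv g) E, Mo)" using g unfolding admissible_def by auto
  then show "q ^ count E (nxt g) * nf_coeff f (Mo, E) = nf_coeff f (Mo, E)"
    using central_mod_coordinates[OF f c, of "(add_mset (prv g) E, Mo)" "prv g"] swap
      sum_nf_dual_snoc_even[OF s[symmetric], of f "prv g"] sum_nf_dual_Cons[of f "prv g" E Mo] c0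
    by (simp add: prv_prv)
qed

lemma central_nf_coeff_support:
  assumes f: "f \<in> nc_poly" and c: "central_mod I f" and a: "nf_coeff f L \<noteq> 0"
  shows "admissible L" and "size (fst L) = size (snd L)" and "nf_coeff f (prod.swap L) = nf_coeff f L"
    and "\<And>a. n dvd count (fst L) a" and "\<And>a. n dvd count (snd L) a"
proof -
  obtain Mo E where L: "L = (Mo, E)" by (cases L)
  show "admissible L" using nf_coeff_nonzero_imp(1)[OF a] .
  have "size E \<le> size Mo" "size Mo \<le> Suc (size E)"
    using nf_coeff_nonzero_imp(3)[OF a] L by (auto simp: balanced_def)
  moreover have "size Mo \<noteq> Suc (size E)"
    using central_nf_coeff_odd[OF f c, of Mo E] a L by auto
  ultimately have s: "size Mo = size E" by simp
  then show "size (fst L) = size (snd L)" using L by simp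
  from \<open>admissible L\<close> consider g where "set_mset Mo \<subseteq> {g}" "g \<notin># E" | d where "set_mset E \<subseteq> {d}" "d \<notin># Mo"
    unfolding admissible_def L by auto
  then have "nf_coeff f (prod.swap L) = nf_coeff f L \<and> (\<forall>a. n dvd count Mo a) \<and> (\<forall>a. n dvd count E a)"
  proof cases
    case (1 g)
    note k = central_nf_coeff_even[OF f c s 1]
    then have "n dvd count E (prv g)" "n dvd count E (nxt g)"
      using a L by (auto simp: q_pow_eq_1_iff[symmetric])
    then show ?thesis using dvd_counts_even_label[OF 1 s] k(1) L by auto
  next
    case (2 d)
    note k = central_nf_coeff_even[OF f c s[symmetric] 2]
    then have "n dvd count Mo (prv d)" "n dvd count Mo (nxt d)"
      using a L by (auto simp: q_pow_eq_1_iff[symmetric])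
    then show ?thesis using dvd_counts_even_label[OF 2 s[symmetric]] k(1) L by auto
  qed
  then show "nf_coeff f (prod.swap L) = nf_coeff f L" "\<And>a. n dvd count (fst L) a" "\<And>a. n dvd count (snd L) a"
    using L by auto
qed

lemma central_nf_coeff_swap:
  assumes f: "f \<in> nc_poly" and c: "central_mod I f"
  shows "nf_coeff f (prod.swap L) = nf_coeff f L"
  using central_nf_coeff_support(3)[OF f c, of L] central_nf_coeff_support(3)[OF f c, of "prod.swap L"]
  by (cases "nf_coeff f L = 0") auto

section \<open>The central generators\<close>

definition gen_pow :: "letter \<Rightarrow> letter \<Rightarrow> nc" where
  "gen_pow a b = nc_pow (nc_add (nc_var a) (nc_var b)) (2 * n)"

definition gens :: "nc set" where
  "gens = {gen_pow a b | a b. a \<noteq> b}"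

lemma gens_eq: "gens = {nc_pow (nc_add x y) (2*n), nc_pow (nc_add x z) (2*n), nc_pow (nc_add y z) (2*n)}"
proof -
  have "gen_pow a b = gen_pow b a" for a b by (simp add: gen_pow_def nc_add_commute)
  then show ?thesis
    unfolding gens_def by (auto simp: gen_pow_def x_def y_def z_def) (metis letter.exhaust)+
qed

lemma gen_pow_pow_in_subalg: "a \<noteq> b \<Longrightarrow> nc_pow (gen_pow a b) k \<in> nc_subalg gens"
  unfolding gens_def by (intro nc_subalg_pow nc_subalg.gen) blast

lemma gen_pow_poly: "gen_pow a b \<in> nc_poly"
  by (simp add: gen_pow_def nc_poly_pow nc_poly_add nc_var_def nc_poly_mono)

definition mono_pair :: "letter list \<Rightarrow> letter list \<Rightarrow> nc" where
  "mono_pair u v = nc_add (nc_mono u) (nc_mono v)"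

lemma mono_pair_poly: "mono_pair u v \<in> nc_poly"
  by (simp add: mono_pair_def nc_poly_add nc_poly_mono)

lemma mono_pair_commute: "mono_pair u v = mono_pair v u"
  by (simp add: mono_pair_def nc_add_commute)

lemma cong_mono_pair_null: "null_word v \<Longrightarrow> cong (mono_pair u v) (nc_mono u)"
  using nc_cong_add_ideal[of "nc_mono v" _ "nc_mono u"]
  by (simp add: mono_pair_def nc_add_commute null_word_def)

lemma cong_mul_mono_pair:
  assumes "null_word (u @ v')" "null_word (u' @ v)"
  shows "cong (nc_mul (mono_pair u u') (mono_pair v v')) (mono_pair (u @ v) (u' @ v'))"
proof -
  have "nc_mul (mono_pair u u') (mono_pair v v') =
      nc_add (nc_mono (u @ v')) (nc_add (nc_mono (u' @ v)) (mono_pair (u @ v) (u' @ v')))"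
    by (simp only: mono_pair_def nc_mul_add_left nc_mul_add_right nc_mul_mono_mono)
       (simp add: fun_eq_iff nc_add_def algebra_simps)
  then show ?thesis
    using assms unfolding null_word_def by (metis nc_cong_add_ideal nc_cong_add nc_cong_refl nc_cong_trans)
qed

lemma cong_pow_var_add:
  assumes "a \<noteq> b" "k \<ge> 1"
  shows "cong (nc_pow (nc_add (nc_var a) (nc_var b)) k) (mono_pair (alternating a b k) (alternating b a k))"
  using assms(2)
proof (induction k rule: dec_induct)
  case base then show ?case by (simp add: nc_mul_one_right nc_var_def mono_pair_def nc_cong_refl)
next
  case (step k)
  let ?F = "nc_add (nc_var a) (nc_var b)"
  have "cong (nc_mul ?F (nc_pow ?F k)) (nc_mul (mono_pair [a] [b]) (mono_pair (alternating a b k) (alternating b a k)))"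
    using step.IH
    by (intro nc_cong_mul) (auto simp: nc_poly_pow mono_pair_poly nc_var_def mono_pair_def nc_cong_refl nc_poly_add nc_poly_mono)
  moreover obtain k' where k': "k = Suc k'" using step.hyps by (cases k) auto
  have "null_word ([a] @ alternating a b k)" "null_word ([b] @ alternating b a k)"
    using k' null_word_append_right[OF null_word_square] by simp_all
  then have "cong (nc_mul (mono_pair [a] [b]) (mono_pair (alternating b a k) (alternating a b k)))
                  (mono_pair (alternating a b (Suc k)) (alternating b a (Suc k)))"
    using cong_mul_mono_pair[where u = "[a]" and u' = "[b]" and v = "alternating b a k" and v' = "alternating a b k"] by simp
  ultimately show ?case by (metis mono_pair_commute nc_cong_trans nc_pow.simps(2))
qed

lemma cong_gen_pow: "a \<noteq> b \<Longrightarrow> cong (gen_pow a b) (mono_pair (ab_pow a b n) (ab_pow b a n))"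
  using cong_pow_var_add[of a b "2 * n"] n_pos by (simp add: gen_pow_def alternating_double)

lemma cong_gen_pow_pow:
  assumes "a \<noteq> b" "m \<ge> 1"
  shows "cong (nc_pow (gen_pow a b) m) (mono_pair (ab_pow a b (n * m)) (ab_pow b a (n * m)))"
  using assms(2)
proof (induction m rule: dec_induct)
  case base then show ?case using cong_gen_pow[OF assms(1)] by (simp add: nc_mul_one_right)
next
  case (step m)
  have "cong (nc_mul (gen_pow a b) (nc_pow (gen_pow a b) m))
       (nc_mul (mono_pair (ab_pow a b n) (ab_pow b a n)) (mono_pair (ab_pow a b (n * m)) (ab_pow b a (n * m))))"
    using step.IH assms(1) by (intro nc_cong_mul cong_gen_pow) (auto simp: nc_poly_pow gen_pow_poly mono_pair_poly)
  moreover have "cong (nc_mul (mono_pair (ab_pow a b n) (ab_pow b a n)) (mono_pair (ab_pow a b (n * m)) (ab_pow b a (n * m))))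
                      (mono_pair (ab_pow a b (n * Suc m)) (ab_pow b a (n * Suc m)))"
  proof -
    obtain n' where n': "n = Suc n'" using n_pos by (cases n) auto
    obtain m' where m': "n * m = Suc m'" using step.hyps n_pos by (cases "n * m") auto
    have "ab_pow a b n = ab_pow a b n' @ [a, b]" "ab_pow b a n = ab_pow b a n' @ [b, a]"
      using n' by (simp_all only: ab_pow_Suc')
    moreover have "ab_pow b a (n * m) = b # a # ab_pow b a m'" "ab_pow a b (n * m) = a # b # ab_pow a b m'"
      using m' by (simp_all only: ab_pow_Suc)
    ultimately have "ab_pow a b n @ ab_pow b a (n * m) = (ab_pow a b n' @ [a]) @ [b, b] @ (a # ab_pow b a m')"
         "ab_pow b a n @ ab_pow a b (n * m) = (ab_pow b a n' @ [b]) @ [a, a] @ (b # ab_pow a b m')"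
      by simp_all
    then have "null_word (ab_pow a b n @ ab_pow b a (n * m))" "null_word (ab_pow b a n @ ab_pow a b (n * m))"
      by (simp_all only: null_word_context null_word_square)
    then show ?thesis
      using cong_mul_mono_pair[where u = "ab_pow a b n" and u' = "ab_pow b a n"
        and v = "ab_pow a b (n * m)" and v' = "ab_pow b a (n * m)"]
      by (simp add: ab_pow_add[symmetric])
  qed
  ultimately show ?case by (auto intro: nc_cong_trans)
qed

lemma word_cong_through_ab_pow:
  assumes "a \<noteq> b" "e \<noteq> a" "e \<noteq> b"
  shows "word_cong (e # ab_pow b a n) 1 (ab_pow a b n @ [e])"
proof -
  have "word_cong (interleave (e # replicate n a) (replicate n b)) (swap_coeff e b ^ n)
          (interleave (replicate n a @ [e]) (replicate n b))"
    using assms word_cong_move[of b e a n n "[]"] by auto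
  then show ?thesis
    using interleave_replicate_append[of n a "[e]" b "[]"] by (simp add: interleave_replicate swap_coeff_pow_n)
qed

lemma cong_mono_pair_ab_pow_commute_first:
  assumes "a \<noteq> b"
  shows "cong (mono_pair (ab_pow a b n @ [a]) (ab_pow b a n @ [a])) (mono_pair (a # ab_pow a b n) (a # ab_pow b a n))"
proof -
  obtain n' where n': "n = Suc n'" using n_pos by (cases n) auto
  have "null_word (ab_pow b a n @ [a])"
    using n' null_word_append_left[OF null_word_square[of a], of "ab_pow b a n' @ [b]"] by (simp add: ab_pow_Suc')
  moreover have "null_word (a # ab_pow a b n)"
    using n' null_word_append_right[OF null_word_square[of a], of "b # ab_pow a b n'"] by (simp add: ab_pow_Suc)
  ultimately show ?thesis
    using cong_mono_pair_null mono_pair_commute by (metis ab_pow_snoc nc_cong_sym nc_cong_trans)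
qed

text \<open>For \<open>e \<in> {a, b}\<close> one summand on each side vanishes; any other letter passes through
  \<open>(ab)\<^sup>n\<close> at the cost \<open>\<kappa>\<^sup>n = 1\<close>.\<close>

lemma cong_mono_pair_ab_pow_commute:
  assumes ab: "a \<noteq> b"
  shows "cong (mono_pair (ab_pow a b n @ [e]) (ab_pow b a n @ [e])) (mono_pair (e # ab_pow a b n) (e # ab_pow b a n))"
proof -
  consider "e = a" | "e = b" | "e \<noteq> a" "e \<noteq> b" by blast
  then show ?thesis
  proof cases
    case 1 then show ?thesis using cong_mono_pair_ab_pow_commute_first[OF ab] by simp
  next
    case 2 then show ?thesis using cong_mono_pair_ab_pow_commute_first[of b a] ab by (simp add: mono_pair_commute)
  next
    case 3
    then have "word_cong (e # ab_pow b a n) 1 (ab_pow a b n @ [e])" "word_cong (e # ab_pow a b n) 1 (ab_pow b a n @ [e])"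
      using ab word_cong_through_ab_pow[of a b e] word_cong_through_ab_pow[of b a e] by auto
    then have "cong (mono_pair (e # ab_pow b a n) (e # ab_pow a b n)) (mono_pair (ab_pow a b n @ [e]) (ab_pow b a n @ [e]))"
      unfolding mono_pair_def word_cong_def by (simp add: nc_cong_add fun_eq_iff nc_smult_def[abs_def])
    then show ?thesis by (simp add: mono_pair_commute nc_cong_sym)
  qed
qed

lemma gen_pow_central: "a \<noteq> b \<Longrightarrow> central_mod I (gen_pow a b)"
proof (rule central_mod_if_commutes_letters[OF gen_pow_poly])
  fix e assume ab: "a \<noteq> b"
  let ?P = "mono_pair (ab_pow a b n) (ab_pow b a n)"
  have "cong (nc_mul (gen_pow a b) (nc_mono [e])) (nc_mul ?P (nc_mono [e]))"
    by (rule nc_cong_mul[OF mono_pair_poly nc_poly_mono cong_gen_pow[OF ab] nc_cong_refl])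
  moreover have "cong (nc_mul (nc_mono [e]) (gen_pow a b)) (nc_mul (nc_mono [e]) ?P)"
    by (rule nc_cong_mul[OF nc_poly_mono gen_pow_poly nc_cong_refl cong_gen_pow[OF ab]])
  moreover have "nc_mul ?P (nc_mono [e]) = mono_pair (ab_pow a b n @ [e]) (ab_pow b a n @ [e])"
    "nc_mul (nc_mono [e]) ?P = mono_pair (e # ab_pow a b n) (e # ab_pow b a n)"
    by (simp_all add: mono_pair_def nc_mul_add_left nc_mul_add_right nc_mul_mono_mono)
  ultimately show "cong (nc_mul (gen_pow a b) (nc_mono [e])) (nc_mul (nc_mono [e]) (gen_pow a b))"
    using cong_mono_pair_ab_pow_commute[OF ab, of e] by (metis nc_cong_sym nc_cong_trans)
qed

lemma subalg_gens_central: "F \<in> nc_subalg gens \<Longrightarrow> F \<in> nc_poly \<and> central_mod I F"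
  by (rule nc_subalg_central) (auto simp: gens_def gen_pow_poly gen_pow_central)

lemma null_word_ab_pow_cross:
  shows "null_word (ab_pow g (nxt g) (Suc i) @ ab_pow (prv g) g (Suc j))"
    and "null_word (ab_pow (nxt g) g (Suc i) @ ab_pow g (prv g) (Suc j))"
proof -
  have eq: "ab_pow g (nxt g) (Suc i) @ ab_pow (prv g) g (Suc j) = ab_pow g (nxt g) i @ [g, nxt g, prv g, g] @ ab_pow (prv g) g j"
    by (simp add: ab_pow_Suc'[of g "nxt g"] ab_pow_Suc[of "prv g" g])
  have "null_word (g # ab_pow (nxt g) (prv g) 1 @ [g])" by (rule null_word_ab_pow_between) simp_all
  then show "null_word (ab_pow g (nxt g) (Suc i) @ ab_pow (prv g) g (Suc j))"
    unfolding eq by (intro null_word_context) (simp add: ab_pow_Suc)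
  have "ab_pow (nxt g) g (Suc i) @ ab_pow g (prv g) (Suc j) = (ab_pow (nxt g) g i @ [nxt g]) @ [g, g] @ (prv g # ab_pow g (prv g) j)"
    by (simp add: ab_pow_Suc'[of "nxt g" g] ab_pow_Suc[of g "prv g"])
  then show "null_word (ab_pow (nxt g) g (Suc i) @ ab_pow g (prv g) (Suc j))"
    by (simp only: null_word_context null_word_square)
qed

lemma subalg_cong_normal_pair_odd_const:
  assumes Mo: "set_mset Mo \<subseteq> {g}" "Mo \<noteq> {#}" and E: "g \<notin># E" and s: "size Mo = size E"
    and dvd: "n dvd count E (nxt g)" "n dvd count E (prv g)"
  shows "\<exists>h\<in>nc_subalg gens. cong h (mono_pair (normal_word (Mo, E)) (normal_word (E, Mo)))"
proof -
  let ?i = "count E (nxt g)" and ?j = "count E (prv g)"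
  define A where "A = nc_pow (gen_pow g (nxt g)) (?i div n)"
  define B where "B = nc_pow (gen_pow g (prv g)) (?j div n)"
  have AB: "A \<in> nc_subalg gens" "B \<in> nc_subalg gens"
    unfolding A_def B_def by (simp_all add: gen_pow_pow_in_subalg)
  have A: "cong A (mono_pair (ab_pow g (nxt g) ?i) (ab_pow (nxt g) g ?i))" if "?i \<noteq> 0"
    using cong_gen_pow_pow[of g "nxt g" "?i div n"] dvd that unfolding A_def by fastforce
  have B: "cong B (mono_pair (ab_pow g (prv g) ?j) (ab_pow (prv g) g ?j))" if "?j \<noteq> 0"
    using cong_gen_pow_pow[of g "prv g" "?j div n"] dvd that unfolding B_def by fastforce
  have nw: "normal_word (Mo, E) = ab_pow g (nxt g) ?i @ ab_pow g (prv g) ?j"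
           "normal_word (E, Mo) = ab_pow (nxt g) g ?i @ ab_pow (prv g) g ?j"
    using normal_word_even_pair[OF Mo E s] by simp_all
  have "?i + ?j \<noteq> 0" using s size_avoiding[OF E] Mo(2) by (metis size_eq_0_iff_empty)
  then consider "?i = 0" "?j \<noteq> 0" | "?i \<noteq> 0" "?j = 0" | "?i \<noteq> 0" "?j \<noteq> 0" by blast
  then show ?thesis
  proof cases
    case 1 then show ?thesis using AB B nw by auto
  next
    case 2 then show ?thesis using AB A nw by auto
  next
    case 3
    then obtain i' j' where i': "?i = Suc i'" and j': "?j = Suc j'" by (metis not0_implies_Suc)
    have "null_word (ab_pow g (nxt g) ?i @ ab_pow (prv g) g ?j)" "null_word (ab_pow (nxt g) g ?i @ ab_pow g (prv g) ?j)"
      using null_word_ab_pow_cross[of g i' j'] i' j' by simp_all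
    then have "cong (nc_mul (mono_pair (ab_pow g (nxt g) ?i) (ab_pow (nxt g) g ?i))
                             (mono_pair (ab_pow g (prv g) ?j) (ab_pow (prv g) g ?j)))
                     (mono_pair (normal_word (Mo, E)) (normal_word (E, Mo)))"
      unfolding nw by (rule cong_mul_mono_pair)
    moreover have "cong (nc_mul A B) (nc_mul (mono_pair (ab_pow g (nxt g) ?i) (ab_pow (nxt g) g ?i))
                                           (mono_pair (ab_pow g (prv g) ?j) (ab_pow (prv g) g ?j)))"
      using 3 by (intro nc_cong_mul A B mono_pair_poly) (simp_all add: B_def nc_poly_pow gen_pow_poly)
    ultimately have "cong (nc_mul A B) (mono_pair (normal_word (Mo, E)) (normal_word (E, Mo)))"
      by (rule nc_cong_trans[rotated])
    moreover have "nc_mul A B \<in> nc_subalg gens" using AB by (rule nc_subalg.mul)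
    ultimately show ?thesis by blast
  qed
qed

lemma subalg_cong_normal_pair:
  assumes adm: "admissible L" and s: "size (fst L) = size (snd L)"
    and dvd: "\<And>a. n dvd count (fst L) a" "\<And>a. n dvd count (snd L) a"
  shows "\<exists>h\<in>nc_subalg gens. cong h (mono_pair (normal_word L) (normal_word (prod.swap L)))"
proof -
  obtain Mo E where L: "L = (Mo, E)" by (cases L)
  show ?thesis
  proof (cases "Mo = {#}")
    case True
    then have "E = {#}" using s L by simp
    then have "cong (nc_add nc_one nc_one) (mono_pair (normal_word L) (normal_word (prod.swap L)))"
      using True L by (simp add: normal_word_empty mono_pair_def nc_one_def nc_cong_refl)
    moreover have "nc_add nc_one nc_one \<in> nc_subalg gens" by (intro nc_subalg.add nc_subalg.one)
    ultimately show ?thesis by blast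
  next
    case False
    from adm consider g where "set_mset Mo \<subseteq> {g}" "g \<notin># E" | d where "set_mset E \<subseteq> {d}" "d \<notin># Mo"
      unfolding admissible_def L by auto
    then show ?thesis
    proof cases
      case 1
      then show ?thesis using subalg_cong_normal_pair_odd_const[OF 1(1) False 1(2)] s dvd L by auto
    next
      case 2
      have "E \<noteq> {#}" using False s L by auto
      then show ?thesis
        using subalg_cong_normal_pair_odd_const[OF 2(1) _ 2(2)] s dvd L by (auto simp: mono_pair_commute)
    qed
  qed
qed

lemma central_imp_cong_subalg:
  assumes f: "f \<in> nc_poly" and c: "central_mod I f"
  shows "\<exists>h\<in>nc_subalg gens. cong f h"
proof -
  define S where "S = {L \<in> label ` nc_supp f. nf_coeff f L \<noteq> 0}"
  have fin: "finite S" using f by (simp add: S_def nc_poly_iff)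
  have swap: "prod.swap L \<in> S" if "L \<in> S" for L
    using that central_nf_coeff_swap[OF f c, of L] nf_coeff_nonzero_imp(2) by (auto simp: S_def)
  have "\<forall>L\<in>S. \<exists>h\<in>nc_subalg gens. cong h (mono_pair (normal_word L) (normal_word (prod.swap L)))"
    using central_nf_coeff_support[OF f c] subalg_cong_normal_pair by (auto simp: S_def)
  then obtain H where H: "\<And>L. L \<in> S \<Longrightarrow> H L \<in> nc_subalg gens"
      "\<And>L. L \<in> S \<Longrightarrow> cong (H L) (mono_pair (normal_word L) (normal_word (prod.swap L)))"
    by metis
  let ?h = "nc_setsum (\<lambda>L. nc_smult (nf_coeff f L / 2) (H L)) S"
  have "cong f (nc_setsum (\<lambda>L. nc_smult (nf_coeff f L) (nc_mono (normal_word L))) S)"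
  proof -
    have "nc_setsum (\<lambda>L. nc_smult (nf_coeff f L) (nc_mono (normal_word L))) (label ` nc_supp f) =
          nc_setsum (\<lambda>L. nc_smult (nf_coeff f L) (nc_mono (normal_word L))) S"
      unfolding nc_setsum_def using f
      by (intro ext sum.mono_neutral_right) (auto simp: S_def nc_poly_iff nc_smult_def)
    then show ?thesis using cong_normal_expansion[OF f] by simp
  qed
  also have "nc_setsum (\<lambda>L. nc_smult (nf_coeff f L) (nc_mono (normal_word L))) S =
      nc_setsum (\<lambda>L. nc_smult (nf_coeff f L / 2) (mono_pair (normal_word L) (normal_word (prod.swap L)))) S"
    unfolding mono_pair_def
    by (rule nc_setsum_symmetrize[where c = "nf_coeff f" and m = "\<lambda>L. nc_mono (normal_word L)",
          OF fin swap central_nf_coeff_swap[OF f c]])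
  also have "cong \<dots> ?h"
    using fin H(2) by (intro nc_cong_setsum nc_cong_smult) (auto intro: nc_cong_sym)
  finally have "cong f ?h" .
  moreover have "?h \<in> nc_subalg gens"
    using fin H(1) by (intro nc_subalg_setsum nc_subalg.smult)
  ultimately show ?thesis by blast
qed

lemma central_mod_iff_subalg:
  "f \<in> nc_poly \<Longrightarrow> central_mod I f \<longleftrightarrow> (\<exists>h\<in>nc_subalg gens. nc_diff f h \<in> I)"
  using central_imp_cong_subalg subalg_gens_central central_mod_cong unfolding nc_cong_def by blast

end

theorem mainTheorem12:
  fixes \<omega> t :: complex and n :: nat
  assumes "\<omega> ^ 3 = 1" and "\<omega> \<noteq> 1"
    and "t \<noteq> 0"
    and "n > 0" and "(- t) ^ n = 1" and "\<forall>k. 0 < k \<and> k < n \<longrightarrow> (- t) ^ k \<noteq> 1"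
  shows "\<forall>f\<in>nc_poly. central_mod (I_M \<omega> t) f \<longleftrightarrow>
     (\<exists>h\<in>nc_subalg {nc_pow (nc_add x y) (2*n), nc_pow (nc_add x z) (2*n),
                     nc_pow (nc_add y z) (2*n)}. nc_diff f h \<in> I_M \<omega> t)"
proof -
  interpret Mt \<omega> t n using assms by unfold_locales auto
  show ?thesis using central_mod_iff_subalg by (simp add: I_M_eq gens_eq)
qed

end
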